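(* Let $\alpha$ be a composition and $n\ge1$. Then $$\{w(\alpha): w\in CRHW_n,\ w(\alpha)\neq0\}=\{\beta:\ \alpha<_c\beta \text{ and } \beta/\!\!/\alpha \text{ is an nc border strip with } n \text{ boxes}\}.$$
   Context: A composition is a finite sequence $\alpha=(\alpha_1,\dots,\alpha_k)$ of positive integers; $\ell(\alpha)=k$. Its diagram is the set of boxes $(i,j)$, $1\le i\le\ell(\alpha)$, $1\le j\le\alpha_i$, rows numbered top to bottom, columns left to right. For compositions $\gamma=(\gamma_1,\dots,\gamma_l)$, $\delta$ write $\gamma\lessdot_c\delta$ if $\delta=(1,\gamma_1,\dots,\gamma_l)$ or $\delta=(\gamma_1,\dots,\gamma_k+1,\dots,\gamma_l)$ for some $k$ with $\gamma_i\neq\gamma_k$ for all $i<k$; $<_c$ is the transitive closure. For $\gamma<_c\delta$, $\delta/\!\!/\gamma$ is the set of boxes of $\delta$ not in the inner shape, the inner shape being the boxes $(\ell(\delta)-\ell(\gamma)+i,j)$, $1\le i\le\ell(\gamma)$, $1\le j\le\gamma_i$. $\mathrm{supp}(\beta/\!\!/\alpha)$ is the set of columns containing a box of $\beta/\!\!/\alpha$; $\beta/\!\!/\alpha$ is an interval shape if this set is a set of consecutive integers. An interval shape is an nc border strip if (1) whenever $(i,1),(i,2)\in\beta/\!\!/\alpha$, the box $(i,1)$ is the bottommost box of column 1 of $\beta/\!\!/\alpha$, and (2) whenever $(i,j),(i,j+1)\in\beta/\!\!/\alpha$ with $j\ge2$, the box $(i,j)$ is the topmost box of column $j$ of $\beta/\!\!/\alpha$.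 Box-adding operators: $\mathfrak t_1(\alpha)=(1,\alpha_1,\dots,\alpha_k)$; for $i\ge2$, $\mathfrak t_i(\alpha)$ increases the leftmost part of $\alpha$ equal to $i-1$ by $1$, and is $0$ if there is no such part; $\mathfrak t_i(0)=0$. A word $w=\mathfrak t_{i_1}\cdots\mathfrak t_{i_n}$ acts by $w(\alpha)=\mathfrak t_{i_1}(\cdots\mathfrak t_{i_n}(\alpha))$. It is a reverse hookword if $i_1\le\cdots\le i_{k+1}>i_{k+2}>\cdots>i_n$ for some $0\le k\le n-1$, connected if $\{i_1,\dots,i_n\}$ is a set of consecutive integers; $CRHW_n$ is the set of connected reverse hookwords of length $n$. *)

theory Defs
  imports Main
begin

text \<open>Compositions are lists of positive naturals. Boxes are pairs (row, column), 1-based.\<close>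

definition is_composition :: "nat list \<Rightarrow> bool" where
  "is_composition \<alpha> \<longleftrightarrow> (\<forall>x\<in>set \<alpha>. 0 < x)"

text \<open>Cover relation gamma <.c delta (indices 0-based here).\<close>
definition comp_cover :: "nat list \<Rightarrow> nat list \<Rightarrow> bool" where
  "comp_cover \<gamma> \<delta> \<longleftrightarrow>
     \<delta> = 1 # \<gamma> \<or>
     (\<exists>k < length \<gamma>. \<delta> = \<gamma>[k := \<gamma> ! k + 1] \<and> (\<forall>i < k. \<gamma> ! i \<noteq> \<gamma> ! k))"

definition comp_less :: "nat list \<Rightarrow> nat list \<Rightarrow> bool" where
  "comp_less = comp_cover\<^sup>+\<^sup>+"

definition diagram :: "nat list \<Rightarrow> (nat \<times> nat) set" where
  "diagram \<alpha> = {(i, j). 1 \<le> i \<and> i \<le> length \<alpha> \<and> 1 \<le> j \<and> j \<le> \<alpha> ! (i - 1)}"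

definition inner_shape :: "nat list \<Rightarrow> nat list \<Rightarrow> (nat \<times> nat) set" where
  "inner_shape \<delta> \<gamma> = {(length \<delta> - length \<gamma> + i, j) | i j.
      1 \<le> i \<and> i \<le> length \<gamma> \<and> 1 \<le> j \<and> j \<le> \<gamma> ! (i - 1)}"

definition skew :: "nat list \<Rightarrow> nat list \<Rightarrow> (nat \<times> nat) set" where
  "skew \<delta> \<gamma> = diagram \<delta> - inner_shape \<delta> \<gamma>"

definition supp :: "(nat \<times> nat) set \<Rightarrow> nat set" where
  "supp S = snd ` S"

definition interval_shape :: "(nat \<times> nat) set \<Rightarrow> bool" where
  "interval_shape S \<longleftrightarrow> (\<forall>a b c. a \<in> supp S \<and> c \<in> supp S \<and> a \<le> b \<and> b \<le> c \<longrightarrow> b \<in> supp S)"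

definition nc_border_strip :: "(nat \<times> nat) set \<Rightarrow> bool" where
  "nc_border_strip S \<longleftrightarrow> interval_shape S \<and>
     (\<forall>i. (i, 1) \<in> S \<and> (i, 2) \<in> S \<longrightarrow> (\<forall>i'. (i', 1) \<in> S \<longrightarrow> i' \<le> i)) \<and>
     (\<forall>i j. 2 \<le> j \<and> (i, j) \<in> S \<and> (i, Suc j) \<in> S \<longrightarrow> (\<forall>i'. (i', j) \<in> S \<longrightarrow> i \<le> i'))"

text \<open>Box-adding operators; None plays the role of 0.\<close>
fun incr_first :: "nat \<Rightarrow> nat list \<Rightarrow> nat list option" where
  "incr_first v [] = None"
| "incr_first v (x # xs) = (if x = v then Some (Suc x # xs) else map_option ((#) x) (incr_first v xs))"

definition box_op :: "nat \<Rightarrow> nat list option \<Rightarrow> nat list option" where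
  "box_op i a = (case a of None \<Rightarrow> None
      | Some \<alpha> \<Rightarrow> (if i = 0 then None else if i = 1 then Some (1 # \<alpha>) else incr_first (i - 1) \<alpha>))"

text \<open>w = t_{i1} ... t_{in} is the list [i1,...,in]; w(alpha) = t_{i1}(...t_{in}(alpha)).\<close>
definition word_act :: "nat list \<Rightarrow> nat list \<Rightarrow> nat list option" where
  "word_act w \<alpha> = foldr box_op w (Some \<alpha>)"

definition reverse_hookword :: "nat list \<Rightarrow> bool" where
  "reverse_hookword w \<longleftrightarrow> (\<forall>x\<in>set w. 1 \<le> x) \<and>
     (\<exists>k < length w. (\<forall>j < k. w ! j \<le> w ! Suc j) \<and>
                     (\<forall>j. k \<le> j \<and> Suc j < length w \<longrightarrow> w ! j > w ! Suc j))"

definition connected_word :: "nat list \<Rightarrow> bool" where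
  "connected_word w \<longleftrightarrow> set w = {Min (set w) .. Max (set w)}"

definition CRHW :: "nat \<Rightarrow> nat list set" where
  "CRHW n = {w. length w = n \<and> reverse_hookword w \<and> connected_word w}"

end

theory Submission
  imports Defs
begin

text \<open>
  Rows are listed from bottom to top (reversed compositions): then t_1 appends a row of
  length 1 and t_c (c >= 2) grows the topmost row of length c - 1, i.e. the last entry
  equal to c - 1 (relation rstep).  The boxes of beta // alpha become the "cells" (q, j) of
  rev beta to the right of the inner row q; beta // alpha is their image under the row flip
  q |-> length beta - q, and the nc conditions turn into the reversed conditions nc_rev.

  Structure of the development:
  (1) Every step adds exactly one cell, in the column given by the letter.  So a word of
      length n adds n cells whose columns are its letters, and connectedness of the word is
      the interval condition on the support.  Every word action is a chain of covers, and
      conversely every cover is one box-adding step.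
  (2) Reverse hookwords give nc border strips: the word acts by a strictly increasing phase
      and then a weakly decreasing phase, and two invariants (rising_inv, falling_inv) show
      that the added cells satisfy nc_rev.
  (3) Every nc border strip over alpha arises (locale strip_target): the word consists of the
      "chain columns" in increasing order, then blocks of letters c filling column c from the
      top, for c = top column down to 2, then letters 1 for the new rows.  This needs that
      beta is reachable by covers, which makes its rows ordered like those of alpha.
\<close>

lemma sorted_wrt_replicate: "R x x \<Longrightarrow> sorted_wrt R (replicate m x)"
  by (induction m) auto

lemma strict_sorted_le_last: "sorted_wrt (<) xs \<Longrightarrow> x \<in> set xs \<Longrightarrow> x \<le> (last xs :: 'a::linorder)"
  by (metis last.simps last_appendR last_in_set linorder_linear list.discI
      sorted_append sorted_simps(2) split_list_last strict_sorted_imp_sorted)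

section \<open>Box-adding operators on reversed compositions\<close>

lemma incr_first_SomeD:
  "incr_first v xs = Some ys \<Longrightarrow> \<exists>i<length xs. xs!i = v \<and> (\<forall>j<i. xs!j \<noteq> v) \<and> ys = xs[i := Suc v]"
proof (induction xs arbitrary: ys)
  case Nil then show ?case by simp
next
  case (Cons x xs)
  show ?case
  proof (cases "x = v")
    case True then show ?thesis using Cons.prems by (intro exI[of _ 0]) auto
  next
    case False
    then obtain zs where zs: "incr_first v xs = Some zs" "ys = x # zs" using Cons.prems
      by (cases "incr_first v xs") auto
    from Cons.IH[OF zs(1)] obtain i where "i < length xs" "xs!i = v" "\<forall>j<i. xs!j \<noteq> v" "zs = xs[i := Suc v]"
      by blast
    then show ?thesis using False zs
      by (intro exI[of _ "Suc i"]) (auto simp: less_Suc_eq_0_disj)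
  qed
qed

lemma incr_first_intro:
  "i < length xs \<Longrightarrow> xs!i = v \<Longrightarrow> \<forall>j<i. xs!j \<noteq> v \<Longrightarrow> incr_first v xs = Some (xs[i := Suc v])"
proof (induction xs arbitrary: i)
  case Nil then show ?case by simp
next
  case (Cons x xs)
  show ?case
  proof (cases i)
    case 0 then show ?thesis using Cons by simp
  next
    case (Suc i')
    have "x \<noteq> v" using Cons.prems Suc by fastforce
    moreover have "incr_first v xs = Some (xs[i' := Suc v])"
      using Cons.prems Suc by (intro Cons.IH) auto
    ultimately show ?thesis using Suc by simp
  qed
qed

text \<open>It is convenient to list the rows of a composition from bottom to top, i.e. to work with
  rev beta.  In these coordinates t_1 appends a new top row of length 1 and t_c (c >= 2)
  increases the topmost row of length c - 1, which is the last such entry of the list.\<close>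
definition rstep :: "nat \<Rightarrow> nat list \<Rightarrow> nat list \<Rightarrow> bool" where
  "rstep c B B' \<longleftrightarrow> (c = 1 \<and> B' = B @ [1]) \<or>
     (2 \<le> c \<and> (\<exists>q<length B. B!q = c - 1 \<and> (\<forall>q'. q < q' \<and> q' < length B \<longrightarrow> B!q' \<noteq> c - 1)
                            \<and> B' = B[q := c]))"

lemma rstep_cases:
  assumes "rstep c B B'"
  obtains (new_row) "c = 1" "B' = B @ [1]"
  | (extend) q where "2 \<le> c" "q < length B" "B!q = c - 1"
      "\<forall>q'. q < q' \<and> q' < length B \<longrightarrow> B!q' \<noteq> c - 1" "B' = B[q := c]"
  using assms unfolding rstep_def by auto

lemma box_op_rstep:
  assumes "box_op c (Some \<beta>) = Some \<beta>'"
  shows "rstep c (rev \<beta>) (rev \<beta>')"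
proof (cases "c = 1")
  case True then show ?thesis using assms by (auto simp: box_op_def rstep_def)
next
  case False
  with assms have c2: "2 \<le> c" by (cases c) (auto simp: box_op_def)
  have "incr_first (c - 1) \<beta> = Some \<beta>'" using assms False c2 by (auto simp: box_op_def)
  from incr_first_SomeD[OF this] obtain i where i: "i < length \<beta>" "\<beta>!i = c - 1"
    "\<forall>j<i. \<beta>!j \<noteq> c - 1" "\<beta>' = \<beta>[i := Suc (c - 1)]" by blast
  define q where "q = length \<beta> - i - 1"
  have q: "q < length (rev \<beta>)" using i(1) by (simp add: q_def)
  have "rev \<beta> ! q = c - 1" using i by (simp add: q_def rev_nth Suc_diff_Suc)
  moreover have "\<forall>q'. q < q' \<and> q' < length (rev \<beta>) \<longrightarrow> rev \<beta> ! q' \<noteq> c - 1"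
    using i(3) by (auto simp: q_def rev_nth)
  moreover have "rev \<beta>' = (rev \<beta>)[q := c]"
    using i(1,4) c2 by (simp add: rev_update q_def)
  ultimately show ?thesis using c2 q unfolding rstep_def by blast
qed

lemma rstep_box_op:
  assumes "rstep c (rev \<beta>) B'"
  shows "box_op c (Some \<beta>) = Some (rev B')"
  using assms
proof (cases rule: rstep_cases)
  case new_row then show ?thesis by (simp add: box_op_def)
next
  case (extend q)
  define i where "i = length \<beta> - q - 1"
  have i: "i < length \<beta>" using extend by (simp add: i_def)
  have "\<beta>!i = c - 1" using extend by (simp add: i_def rev_nth Suc_diff_Suc)
  moreover have "\<forall>j<i. \<beta>!j \<noteq> c - 1"
  proof (intro allI impI)
    fix j assume "j < i"
    then have "q < length \<beta> - Suc j" "length \<beta> - Suc j < length \<beta>" using extend(2) by (auto simp: i_def)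
    then have "rev \<beta> ! (length \<beta> - Suc j) \<noteq> c - 1" using extend(4) by simp
    then show "\<beta>!j \<noteq> c - 1" using \<open>j < i\<close> i by (simp add: rev_nth)
  qed
  ultimately have "incr_first (c - 1) \<beta> = Some (\<beta>[i := Suc (c - 1)])"
    using i by (intro incr_first_intro)
  moreover have "rev B' = \<beta>[i := c]"
    using extend by (simp add: rev_update i_def)
  ultimately show ?thesis using extend(1) by (auto simp: box_op_def)
qed

text \<open>Iterated steps, in the order in which the letters act (rightmost letter of w first).\<close>
inductive rsteps :: "nat list \<Rightarrow> nat list \<Rightarrow> nat list \<Rightarrow> bool" where
  rsteps_Nil: "rsteps [] B B"
| rsteps_Cons: "rstep c B B' \<Longrightarrow> rsteps cs B' B'' \<Longrightarrow> rsteps (c # cs) B B''"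

lemma rsteps_Nil_iff [simp]: "rsteps [] B B' \<longleftrightarrow> B' = B"
  by (auto elim: rsteps.cases intro: rsteps.intros)

lemma rsteps_Cons_iff: "rsteps (c # cs) B B'' \<longleftrightarrow> (\<exists>B'. rstep c B B' \<and> rsteps cs B' B'')"
  by (auto elim: rsteps.cases intro: rsteps.intros)

lemma rsteps_append: "rsteps (xs @ ys) B B'' \<longleftrightarrow> (\<exists>B'. rsteps xs B B' \<and> rsteps ys B' B'')"
  by (induction xs arbitrary: B) (auto simp: rsteps_Cons_iff)

lemma rsteps_replicate_one: "rsteps (replicate m 1) X (X @ replicate m 1)"
proof (induction m arbitrary: X)
  case 0 then show ?case by simp
next
  case (Suc m)
  have "rstep 1 X (X @ [1])" by (simp add: rstep_def)
  then show ?case using Suc.IH[of "X @ [1]"] by (auto simp: rsteps_Cons_iff replicate_app_Cons_same)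
qed

lemma word_act_rsteps:
  "word_act w \<alpha> = Some \<beta> \<Longrightarrow> rsteps (rev w) (rev \<alpha>) (rev \<beta>)"
proof (induction w arbitrary: \<beta>)
  case Nil then show ?case by (simp add: word_act_def)
next
  case (Cons c w)
  obtain \<beta>' where "word_act w \<alpha> = Some \<beta>'" "box_op c (Some \<beta>') = Some \<beta>"
    using Cons.prems by (cases "word_act w \<alpha>") (auto simp: word_act_def box_op_def)
  then show ?case using Cons.IH box_op_rstep by (auto simp: rsteps_append rsteps_Cons_iff)
qed

lemma rsteps_word_act:
  "rsteps (rev w) (rev \<alpha>) B \<Longrightarrow> word_act w \<alpha> = Some (rev B)"
proof (induction w arbitrary: B)
  case Nil then show ?case by (simp add: word_act_def)
next
  case (Cons c w)
  then obtain B' where "rsteps (rev w) (rev \<alpha>) B'" "rstep c B' B"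
    by (auto simp: rsteps_append rsteps_Cons_iff)
  then show ?case using Cons.IH rstep_box_op[of c "rev B'" B] by (simp add: word_act_def)
qed

section \<open>The cells of beta // alpha in reversed coordinates\<close>

context
  fixes \<alpha> :: "nat list"
begin

definition inner :: "nat \<Rightarrow> nat" where
  "inner q = (if q < length \<alpha> then rev \<alpha> ! q else 0)"

definition cells :: "nat list \<Rightarrow> (nat \<times> nat) set" where
  "cells B = {(q, j). q < length B \<and> inner q < j \<and> j \<le> B!q}"

definition admissible :: "nat list \<Rightarrow> bool" where
  "admissible B \<longleftrightarrow> length \<alpha> \<le> length B \<and> (\<forall>q<length B. inner q \<le> B!q \<and> 1 \<le> B!q)"

lemma cells_col_pos: "(q, j) \<in> cells B \<Longrightarrow> 1 \<le> j"
  by (simp add: cells_def)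

lemma inner_beyond: "length \<alpha> \<le> q \<Longrightarrow> inner q = 0"
  by (simp add: inner_def)

lemma finite_cells: "finite (cells B)"
proof -
  have "cells B \<subseteq> {..<length B} \<times> {..Max (insert 0 (set B))}"
    by (auto simp: cells_def intro!: order.trans[OF _ Max_ge])
  then show ?thesis by (rule finite_subset) auto
qed

lemma cells_append1:
  assumes "length \<alpha> \<le> length B"
  shows "cells (B @ [1]) = insert (length B, 1) (cells B)"
  using assms by (auto simp: cells_def nth_append inner_beyond less_Suc_eq)

lemma cells_update:
  assumes "q < length B" "inner q \<le> B!q" "B!q = c - 1" "2 \<le> c"
  shows "cells (B[q := c]) = insert (q, c) (cells B)"
proof (rule set_eqI)
  fix x :: "nat \<times> nat"
  obtain a b where x: "x = (a, b)" by fastforce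
  show "x \<in> cells (B[q := c]) \<longleftrightarrow> x \<in> insert (q, c) (cells B)"
    unfolding x using assms by (cases "a = q") (auto simp: cells_def)
qed

lemma admissible_step: "admissible B \<Longrightarrow> rstep c B B' \<Longrightarrow> admissible B'"
  by (erule rstep_cases) (auto simp: admissible_def nth_append nth_list_update inner_beyond less_Suc_eq)

lemma admissible_pos: assumes "admissible B" "x \<in> set B" shows "0 < x"
proof -
  obtain i where "i < length B" "B!i = x" using assms(2) by (auto simp: in_set_conv_nth)
  then show ?thesis using assms(1) by (fastforce simp: admissible_def)
qed

lemma rstep_cells:
  assumes "admissible B" "rstep c B B'"
  shows "\<exists>q. (q, c) \<notin> cells B \<and> cells B' = insert (q, c) (cells B)"
  using assms(2)
proof (cases rule: rstep_cases)
  case new_row then show ?thesis using assms(1) cells_append1[of B]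
    by (intro exI[of _ "length B"]) (auto simp: admissible_def cells_def)
next
  case (extend q)
  have "inner q \<le> B!q" using assms(1) extend(2) unfolding admissible_def by blast
  then have "cells B' = insert (q, c) (cells B)"
    using extend cells_update[OF extend(2) _ extend(3) extend(1)] by simp
  moreover have "(q, c) \<notin> cells B" using extend by (auto simp: cells_def)
  ultimately show ?thesis by blast
qed

lemma rsteps_cells:
  "admissible B \<Longrightarrow> rsteps cs B B' \<Longrightarrow>
    admissible B' \<and> card (cells B') = card (cells B) + length cs \<and> snd ` cells B' = snd ` cells B \<union> set cs"
proof (induction cs arbitrary: B)
  case Nil then show ?case by simp
next
  case (Cons c cs)
  then obtain B1 where B1: "rstep c B B1" "rsteps cs B1 B'" by (auto simp: rsteps_Cons_iff)
  obtain q where q: "(q, c) \<notin> cells B" "cells B1 = insert (q, c) (cells B)"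
    using rstep_cells[OF Cons.prems(1) B1(1)] by blast
  have "card (cells B1) = card (cells B) + 1" using q finite_cells by simp
  then show ?case using Cons.IH[OF admissible_step[OF Cons.prems(1) B1(1)] B1(2)] q by auto
qed

lemma row_length_from_cells:
  assumes "admissible B" "q < length B" "inner q \<le> v" "inner q < v \<longrightarrow> (q, v) \<in> cells B"
    "(q, Suc v) \<notin> cells B"
  shows "B!q = v"
proof -
  have "inner q \<le> B!q" using assms(1,2) by (simp add: admissible_def)
  then show ?thesis using assms by (cases "B!q" v rule: linorder_cases) (auto simp: cells_def)
qed

lemma row_eq_from_cells:
  assumes "admissible B1" "admissible B2" "q < length B1" "q < length B2"
    "\<And>j. (q, j) \<in> cells B1 \<longleftrightarrow> (q, j) \<in> cells B2"
  shows "B1!q = B2!q"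
proof (rule row_length_from_cells[OF assms(1,3)])
  show "inner q \<le> B2!q" using assms(2,4) by (simp add: admissible_def)
qed (use assms(4,5) in \<open>auto simp: cells_def\<close>)

lemma cells_subset_rows:
  assumes "admissible B'" "admissible B" "cells B' \<subseteq> cells B" "q < length B'"
  shows "q < length B \<and> B'!q \<le> B!q"
proof -
  have a: "inner q \<le> B'!q" "1 \<le> B'!q" using assms(1,4) by (auto simp: admissible_def)
  have ql: "q < length B"
  proof (cases "q < length \<alpha>")
    case True then show ?thesis using assms(2) by (simp add: admissible_def)
  next
    case False
    then have "(q, 1) \<in> cells B'" using a assms(4) inner_beyond by (auto simp: cells_def)
    then show ?thesis using assms(3) by (auto simp: cells_def)
  qed
  show ?thesis
  proof (cases "inner q < B'!q")
    case True
    then have "(q, B'!q) \<in> cells B'" using assms(4) by (auto simp: cells_def)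
    then show ?thesis using assms(3) ql by (auto simp: cells_def)
  next
    case False then show ?thesis using a assms(2) ql by (auto simp: admissible_def)
  qed
qed

lemma admissible_init: assumes "is_composition \<alpha>" shows "admissible (rev \<alpha>)"
proof -
  have "\<And>q. q < length \<alpha> \<Longrightarrow> rev \<alpha> ! q \<in> set \<alpha>"
    by (metis length_rev nth_mem set_rev)
  then show ?thesis using assms by (fastforce simp: admissible_def inner_def is_composition_def Suc_le_eq)
qed

lemma cells_init: "cells (rev \<alpha>) = {}"
  by (auto simp: cells_def inner_def)

end

text \<open>The nc conditions, in reversed coordinates (bottom row = row 0).\<close>
definition nc_rev :: "(nat \<times> nat) set \<Rightarrow> bool" where
  "nc_rev S \<longleftrightarrow> (\<forall>q q'. (q, 1) \<in> S \<and> (q, 2) \<in> S \<and> (q', 1) \<in> S \<longrightarrow> q \<le> q') \<and>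
     (\<forall>q j q'. 2 \<le> j \<and> (q, j) \<in> S \<and> (q, Suc j) \<in> S \<and> (q', j) \<in> S \<longrightarrow> q' \<le> q)"

lemma inner_rev_row:
  assumes "1 \<le> a" "a \<le> length \<alpha>"
  shows "inner \<alpha> (length \<alpha> - a) = \<alpha>!(a - 1)"
proof -
  have "length \<alpha> - a < length \<alpha>" using assms by simp
  then show ?thesis using assms by (simp add: inner_def rev_nth)
qed

lemma inner_shape_iff:
  assumes len: "length \<alpha> \<le> length \<beta>"
  shows "(i, j) \<in> inner_shape \<beta> \<alpha> \<longleftrightarrow>
    1 \<le> i \<and> i \<le> length \<beta> \<and> 1 \<le> j \<and> j \<le> inner \<alpha> (length \<beta> - i)"
proof
  assume "(i, j) \<in> inner_shape \<beta> \<alpha>"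
  then obtain a where a: "i = length \<beta> - length \<alpha> + a" "1 \<le> a" "a \<le> length \<alpha>" "1 \<le> j" "j \<le> \<alpha>!(a - 1)"
    unfolding inner_shape_def by blast
  moreover have "length \<beta> - i = length \<alpha> - a" using a len by simp
  ultimately show "1 \<le> i \<and> i \<le> length \<beta> \<and> 1 \<le> j \<and> j \<le> inner \<alpha> (length \<beta> - i)"
    using len inner_rev_row[of a \<alpha>] by auto
next
  assume h: "1 \<le> i \<and> i \<le> length \<beta> \<and> 1 \<le> j \<and> j \<le> inner \<alpha> (length \<beta> - i)"
  then have "length \<beta> - i < length \<alpha>" using inner_beyond[of \<alpha> "length \<beta> - i"] by (cases "length \<beta> - i < length \<alpha>") auto
  moreover define a where "a = i - (length \<beta> - length \<alpha>)"
  ultimately have a: "i = length \<beta> - length \<alpha> + a" "1 \<le> a" "a \<le> length \<alpha>" "length \<beta> - i = length \<alpha> - a"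
    using h len by auto
  then have "j \<le> \<alpha>!(a - 1)" using h inner_rev_row[of a \<alpha>] by simp
  then show "(i, j) \<in> inner_shape \<beta> \<alpha>" unfolding inner_shape_def using a h by blast
qed

lemma skew_iff:
  assumes len: "length \<alpha> \<le> length \<beta>"
  shows "(i, j) \<in> skew \<beta> \<alpha> \<longleftrightarrow> 1 \<le> i \<and> i \<le> length \<beta> \<and> (length \<beta> - i, j) \<in> cells \<alpha> (rev \<beta>)"
proof -
  have "1 \<le> i \<Longrightarrow> i \<le> length \<beta> \<Longrightarrow> rev \<beta> ! (length \<beta> - i) = \<beta>!(i - 1)"
    by (simp add: rev_nth Suc_diff_Suc)
  then show ?thesis
    unfolding skew_def diagram_def Diff_iff inner_shape_iff[OF len] by (auto simp: cells_def)
qed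

lemma skew_image:
  assumes len: "length \<alpha> \<le> length \<beta>"
  shows "skew \<beta> \<alpha> = (\<lambda>(q, j). (length \<beta> - q, j)) ` cells \<alpha> (rev \<beta>)"
proof (rule set_eqI)
  fix x :: "nat \<times> nat"
  obtain i j where x: "x = (i, j)" by fastforce
  have "(q, j) \<in> cells \<alpha> (rev \<beta>) \<Longrightarrow> q < length \<beta>" for q by (simp add: cells_def)
  then show "x \<in> skew \<beta> \<alpha> \<longleftrightarrow> x \<in> (\<lambda>(q, j). (length \<beta> - q, j)) ` cells \<alpha> (rev \<beta>)"
    unfolding x skew_iff[OF len] by (force intro: rev_image_eqI)
qed

lemma card_skew:
  assumes "length \<alpha> \<le> length \<beta>"
  shows "card (skew \<beta> \<alpha>) = card (cells \<alpha> (rev \<beta>))"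
proof -
  have "inj_on (\<lambda>(q, j). (length \<beta> - q, j)) (cells \<alpha> (rev \<beta>))"
    by (auto simp: inj_on_def cells_def)
  then show ?thesis using skew_image[OF assms] by (simp add: card_image)
qed

lemma supp_skew:
  assumes "length \<alpha> \<le> length \<beta>"
  shows "supp (skew \<beta> \<alpha>) = snd ` cells \<alpha> (rev \<beta>)"
  unfolding supp_def skew_image[OF assms] by force

definition nc_conditions :: "(nat \<times> nat) set \<Rightarrow> bool" where
  "nc_conditions T \<longleftrightarrow>
     (\<forall>i. (i, 1) \<in> T \<and> (i, 2) \<in> T \<longrightarrow> (\<forall>i'. (i', 1) \<in> T \<longrightarrow> i' \<le> i)) \<and>
     (\<forall>i j. 2 \<le> j \<and> (i, j) \<in> T \<and> (i, Suc j) \<in> T \<longrightarrow> (\<forall>i'. (i', j) \<in> T \<longrightarrow> i \<le> i'))"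

lemma flip_image_iff:
  fixes S :: "(nat \<times> nat) set"
  assumes rows: "\<And>q j. (q, j) \<in> S \<Longrightarrow> q < N"
  shows "(i, j) \<in> (\<lambda>(q, j). (N - q, j)) ` S \<longleftrightarrow> 1 \<le> i \<and> i \<le> N \<and> (N - i, j) \<in> S"
proof
  assume "(i, j) \<in> (\<lambda>(q, j). (N - q, j)) ` S"
  then obtain q where "(q, j) \<in> S" "i = N - q" by (auto split: prod.splits)
  moreover from this(1) have "q < N" by (rule rows)
  ultimately show "1 \<le> i \<and> i \<le> N \<and> (N - i, j) \<in> S" by (auto simp: less_imp_le)
next
  assume "1 \<le> i \<and> i \<le> N \<and> (N - i, j) \<in> S"
  then have "(N - i, j) \<in> S" "(i, j) = (\<lambda>(q, j). (N - q, j)) (N - i, j)" by auto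
  then show "(i, j) \<in> (\<lambda>(q, j). (N - q, j)) ` S" by (rule rev_image_eqI)
qed

lemma nc_conditions_flip:
  assumes rows: "\<And>q j. (q, j) \<in> S \<Longrightarrow> q < N"
  shows "nc_conditions ((\<lambda>(q, j). (N - q, j)) ` S) \<longleftrightarrow> nc_rev S"
proof -
  let ?T = "(\<lambda>(q, j). (N - q, j)) ` S"
  have mem: "(i, j) \<in> ?T \<longleftrightarrow> 1 \<le> i \<and> i \<le> N \<and> (N - i, j) \<in> S" for i j
    by (rule flip_image_iff[OF rows])
  have unflip: "N - (N - q) = q" if "(q, j) \<in> S" for q j
  proof -
    have "q < N" using that by (rule rows)
    then show ?thesis by simp
  qed
  show ?thesis
  proof
    assume "nc_conditions ?T"
    note h1 = conjunct1[OF this[unfolded nc_conditions_def mem], rule_format]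
     and h2 = conjunct2[OF this[unfolded nc_conditions_def mem], rule_format]
    show "nc_rev S" unfolding nc_rev_def
    proof (intro conjI allI impI)
      fix q q' assume a: "(q, 1) \<in> S \<and> (q, 2) \<in> S \<and> (q', 1) \<in> S"
      moreover have "q < N" "q' < N" using a rows by blast+
      ultimately have "N - q' \<le> N - q" using h1[of "N - q" "N - q'"] unflip by auto
      then show "q \<le> q'" using \<open>q' < N\<close> by linarith
    next
      fix q j q' assume a: "2 \<le> j \<and> (q, j) \<in> S \<and> (q, Suc j) \<in> S \<and> (q', j) \<in> S"
      moreover have "q < N" "q' < N" using a rows by blast+
      ultimately have "N - q \<le> N - q'" using h2[of j "N - q" "N - q'"] unflip by auto
      then show "q' \<le> q" using \<open>q < N\<close> by linarith
    qed
  next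
    assume h: "nc_rev S"
    show "nc_conditions ?T" unfolding nc_conditions_def mem
    proof (intro conjI allI impI)
      fix i i' assume a: "(1 \<le> i \<and> i \<le> N \<and> (N - i, 1) \<in> S) \<and> 1 \<le> i \<and> i \<le> N \<and> (N - i, 2) \<in> S"
        "1 \<le> i' \<and> i' \<le> N \<and> (N - i', 1) \<in> S"
      then have "N - i \<le> N - i'" using h unfolding nc_rev_def by blast
      then show "i' \<le> i" using a by linarith
    next
      fix i j i' assume a: "2 \<le> j \<and> (1 \<le> i \<and> i \<le> N \<and> (N - i, j) \<in> S) \<and> 1 \<le> i \<and> i \<le> N \<and> (N - i, Suc j) \<in> S"
        "1 \<le> i' \<and> i' \<le> N \<and> (N - i', j) \<in> S"
      then have "N - i' \<le> N - i" using h unfolding nc_rev_def by blast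
      then show "i \<le> i'" using a by linarith
    qed
  qed
qed

lemma nc_border_strip_iff: "nc_border_strip T \<longleftrightarrow> interval_shape T \<and> nc_conditions T"
  by (simp add: nc_border_strip_def nc_conditions_def)

lemma skew_nc_iff:
  assumes "length \<alpha> \<le> length \<beta>"
  shows "nc_conditions (skew \<beta> \<alpha>) \<longleftrightarrow> nc_rev (cells \<alpha> (rev \<beta>))"
  unfolding skew_image[OF assms] by (rule nc_conditions_flip) (simp add: cells_def)

lemma convex_iff_interval:
  fixes A :: "nat set"
  assumes fin: "finite A" and ne: "A \<noteq> {}"
  shows "(\<forall>a b c. a \<in> A \<and> c \<in> A \<and> a \<le> b \<and> b \<le> c \<longrightarrow> b \<in> A) \<longleftrightarrow> A = {Min A .. Max A}"
proof
  assume convex: "\<forall>a b c. a \<in> A \<and> c \<in> A \<and> a \<le> b \<and> b \<le> c \<longrightarrow> b \<in> A"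
  have ends: "Min A \<in> A" "Max A \<in> A" using fin ne by auto
  show "A = {Min A .. Max A}"
  proof
    show "A \<subseteq> {Min A .. Max A}" using fin by (auto intro: Min_le Max_ge)
    show "{Min A .. Max A} \<subseteq> A"
    proof
      fix b assume "b \<in> {Min A .. Max A}"
      then have "Min A \<le> b" "b \<le> Max A" by auto
      then show "b \<in> A" using convex ends by blast
    qed
  qed
next
  assume "A = {Min A .. Max A}"
  then show "\<forall>a b c. a \<in> A \<and> c \<in> A \<and> a \<le> b \<and> b \<le> c \<longrightarrow> b \<in> A"
    by (metis atLeastAtMost_iff order_trans)
qed

lemma interval_shape_iff_connected:
  assumes "supp T = set w" "w \<noteq> []"
  shows "interval_shape T \<longleftrightarrow> connected_word w"
  unfolding interval_shape_def connected_word_def assms(1)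
  using convex_iff_interval[of "set w"] assms(2) by simp

section \<open>The cover relation\<close>

text \<open>Whenever a higher row of alpha is at least as long as a lower one, the same holds in
  beta (in reversed coordinates: q < q' means that row q' lies above row q).  This is
  preserved by the cover relation, because t_c always grows the topmost row of a given length.\<close>
definition order_compatible :: "nat list \<Rightarrow> nat list \<Rightarrow> bool" where
  "order_compatible \<alpha> B \<longleftrightarrow>
     (\<forall>q q'. q < q' \<longrightarrow> q' < length \<alpha> \<longrightarrow> inner \<alpha> q \<le> inner \<alpha> q' \<longrightarrow> B!q \<le> B!q')"

lemma box_op_comp_cover:
  assumes "box_op c (Some \<gamma>) = Some \<delta>"
  shows "comp_cover \<gamma> \<delta>"
proof (cases "c = 1")
  case True then show ?thesis using assms by (simp add: box_op_def comp_cover_def)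
next
  case False
  then have "incr_first (c - 1) \<gamma> = Some \<delta>" using assms by (auto simp: box_op_def split: if_splits)
  from incr_first_SomeD[OF this] obtain i where i: "i < length \<gamma>" "\<gamma>!i = c - 1"
    "\<forall>j<i. \<gamma>!j \<noteq> c - 1" "\<delta> = \<gamma>[i := Suc (c - 1)]" by blast
  then have "\<delta> = \<gamma>[i := \<gamma>!i + 1] \<and> (\<forall>j<i. \<gamma>!j \<noteq> \<gamma>!i)" by simp
  then show ?thesis using i(1) unfolding comp_cover_def by blast
qed

lemma comp_cover_box_op:
  assumes pos: "\<forall>x\<in>set \<gamma>. 0 < x" and cover: "comp_cover \<gamma> \<delta>"
  shows "\<exists>c. box_op c (Some \<gamma>) = Some \<delta>"
  using cover unfolding comp_cover_def
proof (elim disjE exE conjE)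
  assume "\<delta> = 1 # \<gamma>"
  then show ?thesis by (intro exI[of _ 1]) (simp add: box_op_def)
next
  fix k assume k: "k < length \<gamma>" "\<delta> = \<gamma>[k := \<gamma>!k + 1]" "\<forall>i<k. \<gamma>!i \<noteq> \<gamma>!k"
  have "0 < \<gamma>!k" using pos k(1) by simp
  then have "box_op (Suc (\<gamma>!k)) (Some \<gamma>) = incr_first (\<gamma>!k) \<gamma>" by (simp add: box_op_def)
  also have "\<dots> = Some \<delta>" using incr_first_intro[OF k(1) refl] k(2,3) by simp
  finally show ?thesis by blast
qed

lemma word_act_comp_less:
  "word_act w \<alpha> = Some \<beta> \<Longrightarrow> w \<noteq> [] \<Longrightarrow> comp_less \<alpha> \<beta>"
proof (induction w arbitrary: \<beta>)
  case Nil then show ?case by simp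
next
  case (Cons c w)
  obtain \<beta>' where \<beta>': "word_act w \<alpha> = Some \<beta>'" "box_op c (Some \<beta>') = Some \<beta>"
    using Cons.prems by (cases "word_act w \<alpha>") (auto simp: word_act_def box_op_def)
  then have cover: "comp_cover \<beta>' \<beta>" by (simp add: box_op_comp_cover)
  show ?case
  proof (cases "w = []")
    case True
    then show ?thesis using cover \<beta>'(1) by (simp add: word_act_def comp_less_def)
  next
    case False
    then have "comp_less \<alpha> \<beta>'" using Cons.IH \<beta>'(1) by blast
    then show ?thesis using cover unfolding comp_less_def by (rule tranclp.trancl_into_trancl)
  qed
qed

text \<open>Steps preserve order compatibility: a row q0 grows only if no higher row has the same
  length, so a higher row that was at least as long stays at least as long.\<close>
lemma rstep_order_compatible:
  assumes adm: "admissible \<alpha> B" and oc: "order_compatible \<alpha> B" and st: "rstep c B B'"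
  shows "order_compatible \<alpha> B'"
  using st
proof (cases rule: rstep_cases)
  case new_row
  then show ?thesis using oc adm by (auto simp: order_compatible_def admissible_def nth_append)
next
  case (extend q0)
  show ?thesis unfolding order_compatible_def
  proof (intro allI impI)
    fix q q' assume q: "q < q'" "q' < length \<alpha>" "inner \<alpha> q \<le> inner \<alpha> q'"
    have len: "q' < length B" using q(2) adm by (simp add: admissible_def)
    have le: "B!q \<le> B!q'" using oc q by (simp add: order_compatible_def)
    show "B'!q \<le> B'!q'"
    proof (cases "q = q0")
      case True
      then have "B!q' \<noteq> c - 1" using extend(4) q(1) len by blast
      then show ?thesis using True le extend len q(1) by auto
    next
      case False
      then show ?thesis using le extend len by (cases "q' = q0") auto
    qed
  qed
qed

lemma comp_less_order_compatible:
  assumes comp: "is_composition \<alpha>" and less: "comp_less \<alpha> \<beta>"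
  shows "admissible \<alpha> (rev \<beta>) \<and> order_compatible \<alpha> (rev \<beta>)"
proof -
  have step_inv: "admissible \<alpha> (rev \<delta>) \<and> order_compatible \<alpha> (rev \<delta>)"
    if inv: "admissible \<alpha> (rev \<gamma>) \<and> order_compatible \<alpha> (rev \<gamma>)"
      and cover: "comp_cover \<gamma> \<delta>" for \<gamma> \<delta>
  proof -
    have "\<forall>x\<in>set \<gamma>. 0 < x" using inv admissible_pos[of \<alpha> "rev \<gamma>"] by simp
    then obtain c where "box_op c (Some \<gamma>) = Some \<delta>" using comp_cover_box_op cover by blast
    then have "rstep c (rev \<gamma>) (rev \<delta>)" by (rule box_op_rstep)
    then show ?thesis using inv admissible_step rstep_order_compatible by blast
  qed
  have init: "admissible \<alpha> (rev \<alpha>) \<and> order_compatible \<alpha> (rev \<alpha>)"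
    using admissible_init[OF comp] by (auto simp: order_compatible_def inner_def)
  from less[unfolded comp_less_def] show ?thesis
  proof (induction rule: tranclp_induct)
    case (base \<delta>) then show ?case using step_inv[OF init] by blast
  next
    case (step \<gamma> \<delta>) then show ?case using step_inv by blast
  qed
qed

section \<open>Reverse hookwords produce nc border strips\<close>

text \<open>A reverse hookword w = xs @ ys with xs weakly increasing and ys strictly decreasing acts
  in two phases: first the letters of ys in increasing order ("rising phase"), then those of
  xs in weakly decreasing order ("falling phase").  Each phase preserves an invariant on the
  cells added so far; the falling invariant contains the nc conditions.\<close>

context
  fixes \<alpha> :: "nat list"
begin

text \<open>Rising phase with largest letter f so far: every column holds at most one cell, all
  columns are at most f, and no row above a cell (q, j) has length j - 1 (so later letters
  cannot grow such a row).\<close>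
definition rising_inv :: "nat list \<Rightarrow> nat \<Rightarrow> bool" where
  "rising_inv B f \<longleftrightarrow> (\<forall>q j. (q, j) \<in> cells \<alpha> B \<longrightarrow> j \<le> f \<and> (\<forall>q'. (q', j) \<in> cells \<alpha> B \<longrightarrow> q' = q) \<and>
      (\<forall>q'. q < q' \<and> q' < length B \<longrightarrow> B!q' \<noteq> j - 1))"

text \<open>Falling phase with last letter f: the columns below f still satisfy the rising
  invariant, and every horizontally adjacent pair of cells (q, c), (q, c + 1) with
  2 <= c <= f is protected against a later growth of a higher row into column c.\<close>
definition sparse_below :: "nat list \<Rightarrow> nat \<Rightarrow> bool" where
  "sparse_below B f \<longleftrightarrow> (\<forall>q j. (q, j) \<in> cells \<alpha> B \<and> j < f \<longrightarrow> (\<forall>q'. (q', j) \<in> cells \<alpha> B \<longrightarrow> q' = q) \<and>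
      (\<forall>q'. q < q' \<and> q' < length B \<longrightarrow> B!q' \<noteq> j - 1))"

definition links_topmost :: "nat list \<Rightarrow> nat \<Rightarrow> bool" where
  "links_topmost B f \<longleftrightarrow> (\<forall>q c. (q, c) \<in> cells \<alpha> B \<and> (q, Suc c) \<in> cells \<alpha> B \<and> 2 \<le> c \<and> c \<le> f \<longrightarrow>
      (\<forall>q'. q < q' \<and> q' < length B \<longrightarrow> B!q' \<noteq> c - 1))"

definition falling_inv :: "nat list \<Rightarrow> nat \<Rightarrow> bool" where
  "falling_inv B f \<longleftrightarrow> nc_rev (cells \<alpha> B) \<and> sparse_below B f \<and> links_topmost B f"

lemma rising_inv_falling_inv: assumes h: "rising_inv B f" shows "falling_inv B f"
proof -
  have u: "\<And>q j q'. (q, j) \<in> cells \<alpha> B \<Longrightarrow> (q', j) \<in> cells \<alpha> B \<Longrightarrow> q' = q"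
   and a: "\<And>q j q'. (q, j) \<in> cells \<alpha> B \<Longrightarrow> q < q' \<Longrightarrow> q' < length B \<Longrightarrow> B!q' \<noteq> j - 1"
    using h unfolding rising_inv_def by blast+
  show ?thesis unfolding falling_inv_def sparse_below_def links_topmost_def nc_rev_def
    by (intro conjI allI impI; (elim conjE)?) (metis u a order_refl)+
qed

lemma rising_inv_init: "admissible \<alpha> B \<Longrightarrow> cells \<alpha> B = {} \<Longrightarrow> rising_inv B 0"
  by (simp add: rising_inv_def)

lemma rising_inv_new_row:
  assumes inv: "rising_inv B 0" and adm: "admissible \<alpha> B"
  shows "rising_inv (B @ [1]) 1"
proof -
  have "j \<le> 0" "1 \<le> j" if "(q, j) \<in> cells \<alpha> B" for q j
    using inv cells_col_pos[OF that] that by (auto simp: rising_inv_def)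
  then have "cells \<alpha> B = {}" by fastforce
  then have "cells \<alpha> (B @ [1]) = {(length B, 1)}" using cells_append1[of \<alpha> B] adm
    by (simp add: admissible_def)
  then show ?thesis by (auto simp: rising_inv_def)
qed

text \<open>A letter c larger than all previous ones adds a cell in a fresh column c, to the topmost
  row of length c - 1; rows above it keep lengths different from c - 1 and from j - 1 for
  every earlier column j < c.\<close>
lemma rising_inv_extend:
  assumes inv: "rising_inv B f" and adm: "admissible \<alpha> B" and fc: "f < c" and c2: "2 \<le> c"
    and q0: "q0 < length B" "B!q0 = c - 1"
    and topmost: "\<forall>q'. q0 < q' \<and> q' < length B \<longrightarrow> B!q' \<noteq> c - 1"
  shows "rising_inv (B[q0 := c]) c"
proof -
  have "inner \<alpha> q0 \<le> B!q0" using adm q0(1) by (simp add: admissible_def)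
  then have new: "cells \<alpha> (B[q0 := c]) = insert (q0, c) (cells \<alpha> B)"
    using cells_update[OF q0(1) _ q0(2) c2] by simp
  have old_col: "j \<le> f" if "(q, j) \<in> cells \<alpha> B" for q j
    using inv that by (simp add: rising_inv_def)
  have old_unique: "q' = q" if "(q, j) \<in> cells \<alpha> B" "(q', j) \<in> cells \<alpha> B" for q q' j
    using inv that by (simp add: rising_inv_def)
  have old_above: "B!q' \<noteq> j - 1" if "(q, j) \<in> cells \<alpha> B" "q < q'" "q' < length B" for q q' j
    using inv that by (simp add: rising_inv_def)
  have cases_new: "(q = q0 \<and> j = c) \<or> ((q, j) \<in> cells \<alpha> B \<and> j < c)"
    if "(q, j) \<in> cells \<alpha> (B[q0 := c])" for q j
    using that new old_col fc by fastforce
  show ?thesis unfolding rising_inv_def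
  proof (intro allI impI conjI)
    fix q j assume a: "(q, j) \<in> cells \<alpha> (B[q0 := c])"
    show "j \<le> c" using cases_new[OF a] by auto
    show "q' = q" if "(q', j) \<in> cells \<alpha> (B[q0 := c])" for q'
      using cases_new[OF a] cases_new[OF that] old_unique by auto
    show "B[q0 := c] ! q' \<noteq> j - 1" if "q < q' \<and> q' < length (B[q0 := c])" for q'
      using cases_new[OF a]
    proof
      assume "q = q0 \<and> j = c"
      then show ?thesis using that topmost by auto
    next
      assume "(q, j) \<in> cells \<alpha> B \<and> j < c"
      then show ?thesis using that old_above[of q j q'] by (cases "q' = q0") auto
    qed
  qed
qed

lemma rising_inv_step:
  assumes inv: "rising_inv B f" and adm: "admissible \<alpha> B" and fc: "f < c" and st: "rstep c B B'"
  shows "rising_inv B' c"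
  using st
proof (cases rule: rstep_cases)
  case new_row then show ?thesis using rising_inv_new_row[OF _ adm] inv fc by simp
next
  case (extend q0) then show ?thesis using rising_inv_extend[OF inv adm fc] by simp
qed

lemma falling_inv_new_row:
  assumes inv: "falling_inv B f" and wf: "admissible \<alpha> B"
  shows "falling_inv (B @ [1]) 1"
proof -
  have bx: "cells \<alpha> (B @ [1]) = insert (length B, 1) (cells \<alpha> B)"
    using cells_append1[of \<alpha> B] wf by (simp add: admissible_def)
  have old: "\<And>q j. (q, j) \<in> cells \<alpha> B \<Longrightarrow> q < length B" by (simp add: cells_def)
  have nc: "nc_rev (cells \<alpha> B)" using inv by (simp add: falling_inv_def)
  have "nc_rev (cells \<alpha> (B @ [1]))"
    unfolding nc_rev_def
  proof (intro conjI allI impI)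
    fix q q' assume a: "(q, 1) \<in> cells \<alpha> (B @ [1]) \<and> (q, 2) \<in> cells \<alpha> (B @ [1]) \<and> (q', 1) \<in> cells \<alpha> (B @ [1])"
    have q2: "(q, 2) \<in> cells \<alpha> B" using a bx by auto
    then have q1: "(q, 1) \<in> cells \<alpha> B" using a bx old by auto
    show "q \<le> q'"
    proof (cases "q' = length B")
      case True then show ?thesis using old q1 by (simp add: less_imp_le)
    next
      case False then have "(q', 1) \<in> cells \<alpha> B" using a bx by auto
      then show ?thesis using q1 q2 nc by (auto simp: nc_rev_def)
    qed
  next
    fix q j q' assume a: "2 \<le> j \<and> (q, j) \<in> cells \<alpha> (B @ [1]) \<and> (q, Suc j) \<in> cells \<alpha> (B @ [1])
      \<and> (q', j) \<in> cells \<alpha> (B @ [1])"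
    then have "(q, j) \<in> cells \<alpha> B" "(q, Suc j) \<in> cells \<alpha> B" "(q', j) \<in> cells \<alpha> B" using bx by auto
    then show "q' \<le> q" using a nc by (auto simp: nc_rev_def)
  qed
  moreover have "sparse_below (B @ [1]) 1" using cells_col_pos by (fastforce simp: sparse_below_def)
  moreover have "links_topmost (B @ [1]) 1" by (simp add: links_topmost_def)
  ultimately show ?thesis by (simp add: falling_inv_def)
qed

context
  fixes B :: "nat list" and f c q0 :: nat
  assumes inv: "falling_inv B f" and wf: "admissible \<alpha> B" and c2: "2 \<le> c" and cf: "c \<le> f"
    and q0: "q0 < length B" "B!q0 = c - 1"
    and topmost: "\<forall>q'. q0 < q' \<and> q' < length B \<longrightarrow> B!q' \<noteq> c - 1"
begin

lemma extend_cells_iff: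
  "(a, b) \<in> cells \<alpha> (B[q0 := c]) \<longleftrightarrow> (a = q0 \<and> b = c) \<or> (a, b) \<in> cells \<alpha> B"
proof -
  have "inner \<alpha> q0 \<le> B!q0" using wf q0 unfolding admissible_def by blast
  then show ?thesis using cells_update[OF q0(1) _ q0(2) c2] by auto
qed

lemma extend_nth: "B[q0 := c] ! q' = (if q' = q0 then c else B!q')"
  using q0 by simp

lemma extend_no_right_neighbour: "(q0, Suc c) \<notin> cells \<alpha> B"
  using q0 by (auto simp: cells_def)

lemma column_unique_below:
  "(q, j) \<in> cells \<alpha> B \<Longrightarrow> j < f \<Longrightarrow> (q', j) \<in> cells \<alpha> B \<Longrightarrow> q' = q"
  using inv unfolding falling_inv_def sparse_below_def by blast

lemma no_copy_above:
  "(q, j) \<in> cells \<alpha> B \<Longrightarrow> j < f \<Longrightarrow> q < q' \<Longrightarrow> q' < length B \<Longrightarrow> B!q' \<noteq> j - 1"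
  using inv unfolding falling_inv_def sparse_below_def by blast

lemma link_protected:
  "(q, j) \<in> cells \<alpha> B \<Longrightarrow> (q, Suc j) \<in> cells \<alpha> B \<Longrightarrow> 2 \<le> j \<Longrightarrow> j \<le> f \<Longrightarrow>
      q < q' \<Longrightarrow> q' < length B \<Longrightarrow> B!q' \<noteq> j - 1"
  using inv unfolding falling_inv_def links_topmost_def by blast

lemma extend_nc: "nc_rev (cells \<alpha> (B[q0 := c]))"
  unfolding nc_rev_def
proof (intro conjI allI impI)
  have nc: "nc_rev (cells \<alpha> B)" using inv by (simp add: falling_inv_def)
  fix p p' assume a: "(p, 1) \<in> cells \<alpha> (B[q0 := c]) \<and> (p, 2) \<in> cells \<alpha> (B[q0 := c]) \<and>
    (p', 1) \<in> cells \<alpha> (B[q0 := c])"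
  have p1: "(p, 1) \<in> cells \<alpha> B" "(p', 1) \<in> cells \<alpha> B" using a extend_cells_iff c2 by auto
  show "p \<le> p'"
  proof (cases "(p, 2) \<in> cells \<alpha> B")
    case True then show ?thesis using p1 nc by (auto simp: nc_rev_def)
  next
    case False
    then have "p = q0" "c = 2" using a extend_cells_iff by auto
    then show ?thesis using column_unique_below[OF p1(1) _ p1(2)] cf by simp
  qed
next
  have nc: "nc_rev (cells \<alpha> B)" using inv by (simp add: falling_inv_def)
  fix p j p' assume a: "2 \<le> j \<and> (p, j) \<in> cells \<alpha> (B[q0 := c]) \<and> (p, Suc j) \<in> cells \<alpha> (B[q0 := c]) \<and>
    (p', j) \<in> cells \<alpha> (B[q0 := c])"
  show "p' \<le> p"
  proof (cases "p = q0 \<and> Suc j = c")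
    case True
    then have "(p, j) \<in> cells \<alpha> B" "(p', j) \<in> cells \<alpha> B" using a extend_cells_iff by auto
    then show ?thesis using column_unique_below True cf by fastforce
  next
    case False
    then have s1: "(p, Suc j) \<in> cells \<alpha> B" using a extend_cells_iff by auto
    have s0: "(p, j) \<in> cells \<alpha> B" using a extend_cells_iff s1 extend_no_right_neighbour by auto
    show ?thesis
    proof (cases "(p', j) \<in> cells \<alpha> B")
      case True then show ?thesis using s0 s1 a nc by (auto simp: nc_rev_def)
    next
      case False
      then have pj: "p' = q0" "j = c" using a extend_cells_iff by auto
      show ?thesis
      proof (rule ccontr)
        assume "\<not> p' \<le> p"
        then have "B!q0 \<noteq> c - 1" using link_protected[OF s0 s1, of q0] a pj cf q0 by auto
        then show False using q0 by simp
      qed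
    qed
  qed
qed

lemma extend_sparse_below: "sparse_below (B[q0 := c]) c"
  unfolding sparse_below_def
proof (intro allI impI conjI)
  fix p j p' assume a: "(p, j) \<in> cells \<alpha> (B[q0 := c]) \<and> j < c" "(p', j) \<in> cells \<alpha> (B[q0 := c])"
  then have "(p, j) \<in> cells \<alpha> B" "(p', j) \<in> cells \<alpha> B" using extend_cells_iff by auto
  then show "p' = p" using column_unique_below a cf by simp
next
  fix p j p' assume a: "(p, j) \<in> cells \<alpha> (B[q0 := c]) \<and> j < c" "p < p' \<and> p' < length (B[q0 := c])"
  then have "(p, j) \<in> cells \<alpha> B" using extend_cells_iff by auto
  then show "B[q0 := c] ! p' \<noteq> j - 1"
    using extend_nth no_copy_above a cf by (cases "p' = q0") auto
qed

lemma extend_links_topmost: "links_topmost (B[q0 := c]) c"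
  unfolding links_topmost_def
proof (intro allI impI)
  fix p c0 p' assume a: "(p, c0) \<in> cells \<alpha> (B[q0 := c]) \<and> (p, Suc c0) \<in> cells \<alpha> (B[q0 := c]) \<and>
    2 \<le> c0 \<and> c0 \<le> c" "p < p' \<and> p' < length (B[q0 := c])"
  show "B[q0 := c] ! p' \<noteq> c0 - 1"
  proof (cases "p = q0 \<and> Suc c0 = c")
    case True
    then have "(p, c0) \<in> cells \<alpha> B" using a extend_cells_iff by auto
    then show ?thesis using extend_nth no_copy_above[of p c0 p'] a True cf by simp
  next
    case False
    then have s1: "(p, Suc c0) \<in> cells \<alpha> B" using a extend_cells_iff by auto
    have s0: "(p, c0) \<in> cells \<alpha> B" using a extend_cells_iff s1 extend_no_right_neighbour by auto
    show ?thesis using extend_nth link_protected[OF s0 s1, of p'] a cf by (cases "p' = q0") auto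
  qed
qed

end

lemma falling_inv_step:
  assumes inv: "falling_inv B f" and wf: "admissible \<alpha> B" and c1: "1 \<le> c" and cf: "c \<le> f"
    and st: "rstep c B B'"
  shows "falling_inv B' c"
  using st
proof (cases rule: rstep_cases)
  case new_row then show ?thesis using falling_inv_new_row[OF inv wf] by simp
next
  case (extend q0)
  note hyps = inv wf extend(1) cf extend(2-4)
  show ?thesis using extend_nc[OF hyps] extend_sparse_below[OF hyps] extend_links_topmost[OF hyps] extend(5)
    by (simp add: falling_inv_def)
qed

end

lemma reverse_hookword_split:
  assumes "reverse_hookword w"
  obtains xs ys where "w = xs @ ys" "ys \<noteq> []" "sorted xs" "sorted_wrt (>) ys"
    "\<forall>x\<in>set xs. x \<le> hd ys"
proof -
  obtain k where k: "k < length w" "\<forall>j<k. w!j \<le> w!Suc j"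
    "\<forall>j. k \<le> j \<and> Suc j < length w \<longrightarrow> w!j > w!Suc j"
    using assms unfolding reverse_hookword_def by blast
  have sorted_prefix: "sorted (take (Suc k) w)"
    unfolding sorted_iff_nth_Suc using k by auto
  have take_Suc: "take (Suc k) w = take k w @ [w!k]" using k(1) by (simp add: take_Suc_conv_app_nth)
  have hd_drop: "hd (drop k w) = w!k" using k(1) by (simp add: hd_drop_conv_nth)
  have tr: "transp ((>) :: nat \<Rightarrow> nat \<Rightarrow> bool)" by (auto simp: transp_def)
  have "sorted_wrt (>) (drop k w)"
    unfolding sorted_wrt_iff_nth_Suc_transp[OF tr] using k by auto
  moreover have "sorted (take k w)" "\<forall>x\<in>set (take k w). x \<le> hd (drop k w)"
    using sorted_prefix unfolding take_Suc sorted_append hd_drop by auto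
  moreover have "w = take k w @ drop k w" "drop k w \<noteq> []" using k(1) by simp_all
  ultimately show ?thesis using that by blast
qed

lemma reverse_hookword_of_split:
  assumes pos: "\<forall>x\<in>set w. 1 \<le> x" and w: "w = xs @ ys" "ys \<noteq> []"
    and inc: "sorted xs" and dec: "sorted_wrt (>) ys" and bound: "\<forall>x\<in>set xs. x \<le> hd ys"
  shows "reverse_hookword w"
proof -
  define k where "k = length xs"
  have "k < length w" using w by (simp add: k_def)
  moreover have "\<forall>j<k. w!j \<le> w!Suc j"
  proof (intro allI impI)
    fix j assume j: "j < k"
    show "w!j \<le> w!Suc j"
    proof (cases "Suc j < k")
      case True then show ?thesis using w inc j by (simp add: nth_append k_def sorted_nth_mono)
    next
      case False
      then have "Suc j = k" using j by simp
      moreover have "xs!j \<in> set xs" using j by (simp add: k_def)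
      ultimately show ?thesis using w bound j by (simp add: nth_append k_def hd_conv_nth)
    qed
  qed
  moreover have "\<forall>j. k \<le> j \<and> Suc j < length w \<longrightarrow> w!j > w!Suc j"
  proof (intro allI impI)
    fix j assume j: "k \<le> j \<and> Suc j < length w"
    then have "ys!(j - k) > ys!(Suc j - k)"
      using sorted_wrt_nth_less[OF dec, of "j - k" "Suc j - k"] w by (auto simp: k_def)
    then show "w!j > w!Suc j" using w j by (simp add: nth_append k_def not_less Suc_diff_le)
  qed
  ultimately show ?thesis using pos unfolding reverse_hookword_def by blast
qed

lemma rising_phase:
  "admissible \<alpha> B \<Longrightarrow> rising_inv \<alpha> B f \<Longrightarrow> rsteps d B B' \<Longrightarrow> sorted_wrt (<) d \<Longrightarrow> (\<forall>x\<in>set d. f < x) \<Longrightarrow>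
    rising_inv \<alpha> B' (last (f#d)) \<and> admissible \<alpha> B'"
proof (induction d arbitrary: B f)
  case Nil then show ?case by simp
next
  case (Cons c d)
  then obtain B1 where B1: "rstep c B B1" "rsteps d B1 B'" by (auto simp: rsteps_Cons_iff)
  have "rising_inv \<alpha> B1 c" using rising_inv_step Cons.prems B1 by simp
  moreover have "admissible \<alpha> B1" using admissible_step Cons.prems B1 by blast
  ultimately have "rising_inv \<alpha> B' (last (c#d)) \<and> admissible \<alpha> B'" using Cons.IH B1 Cons.prems by auto
  then show ?case by simp
qed

lemma falling_phase:
  "admissible \<alpha> B \<Longrightarrow> falling_inv \<alpha> B f \<Longrightarrow> rsteps ph B B' \<Longrightarrow> sorted_wrt (\<ge>) ph \<Longrightarrow> (\<forall>x\<in>set ph. 1 \<le> x \<and> x \<le> f) \<Longrightarrow>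
    falling_inv \<alpha> B' (last (f#ph)) \<and> admissible \<alpha> B'"
proof (induction ph arbitrary: B f)
  case Nil then show ?case by simp
next
  case (Cons c ph)
  then obtain B1 where B1: "rstep c B B1" "rsteps ph B1 B'" by (auto simp: rsteps_Cons_iff)
  have "falling_inv \<alpha> B1 c" using falling_inv_step Cons.prems B1 by simp
  moreover have "admissible \<alpha> B1" using admissible_step Cons.prems B1 by blast
  ultimately have "falling_inv \<alpha> B' (last (c#ph)) \<and> admissible \<alpha> B'" using Cons.IH B1 Cons.prems by auto
  then show ?case by simp
qed

lemma hookword_cells:
  assumes comp: "is_composition \<alpha>" and act: "word_act w \<alpha> = Some \<beta>" and hook: "reverse_hookword w"
  shows "nc_rev (cells \<alpha> (rev \<beta>)) \<and> card (cells \<alpha> (rev \<beta>)) = length w \<and>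
         snd ` cells \<alpha> (rev \<beta>) = set w \<and> admissible \<alpha> (rev \<beta>)"
proof -
  have steps: "rsteps (rev w) (rev \<alpha>) (rev \<beta>)" using act by (rule word_act_rsteps)
  obtain xs ys where split: "w = xs @ ys" "ys \<noteq> []" "sorted xs" "sorted_wrt (>) ys"
     "\<forall>x\<in>set xs. x \<le> hd ys" using reverse_hookword_split[OF hook] by blast
  have pos: "\<forall>x\<in>set w. 1 \<le> x" using hook by (simp add: reverse_hookword_def)
  have "rev w = rev ys @ rev xs" using split(1) by simp
  then have "rsteps (rev ys @ rev xs) (rev \<alpha>) (rev \<beta>)" using steps by simp
  then obtain B1 where B1: "rsteps (rev ys) (rev \<alpha>) B1" "rsteps (rev xs) B1 (rev \<beta>)"
    unfolding rsteps_append by blast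
  have adm0: "admissible \<alpha> (rev \<alpha>)" using admissible_init comp .
  have rising0: "rising_inv \<alpha> (rev \<alpha>) 0" using rising_inv_init adm0 cells_init by blast
  have "sorted_wrt (<) (rev ys)" using split(4) by (simp add: sorted_wrt_rev)
  moreover have "\<forall>x\<in>set (rev ys). 0 < x" using pos split(1) by auto
  ultimately have after_rising: "rising_inv \<alpha> B1 (last (0 # rev ys)) \<and> admissible \<alpha> B1"
    using rising_phase[OF adm0 rising0 B1(1)] by blast
  have last_rising: "last (0 # rev ys) = hd ys" using split(2) by (simp add: last_rev)
  have "sorted_wrt (\<ge>) (rev xs)" using split(3) by (simp add: sorted_wrt_rev)
  moreover have "\<forall>x\<in>set (rev xs). 1 \<le> x \<and> x \<le> hd ys" using split pos by auto
  moreover have "falling_inv \<alpha> B1 (hd ys)" "admissible \<alpha> B1" using after_rising rising_inv_falling_inv last_rising by auto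
  ultimately have "falling_inv \<alpha> (rev \<beta>) (last (hd ys # rev xs)) \<and> admissible \<alpha> (rev \<beta>)"
    using falling_phase[OF _ _ B1(2)] by blast
  moreover have "card (cells \<alpha> (rev \<beta>)) = length w \<and> snd ` cells \<alpha> (rev \<beta>) = set w"
    using rsteps_cells[OF adm0 steps] cells_init by simp
  ultimately show ?thesis by (simp add: falling_inv_def)
qed

section \<open>Every nc border strip is the image of a connected reverse hookword\<close>

locale strip_target =
  fixes \<alpha> :: "nat list" and B :: "nat list"
  assumes comp: "is_composition \<alpha>"
    and adm: "admissible \<alpha> B"
    and compatible: "order_compatible \<alpha> B"
    and nc: "nc_rev (cells \<alpha> B)"
    and nonempty: "cells \<alpha> B \<noteq> {}"
begin

abbreviation S :: "(nat \<times> nat) set" where "S \<equiv> cells \<alpha> B"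

text \<open>The rightmost column of the strip, the columns j linked to column j + 1 by a row, and
  the columns visited by the strictly increasing part of the word.\<close>
definition top_col :: nat where "top_col = Max (snd ` S)"
definition linked_cols :: "nat set" where "linked_cols = {j. \<exists>q. (q, j) \<in> S \<and> (q, Suc j) \<in> S}"
definition chain_cols :: "nat set" where "chain_cols = insert top_col linked_cols"

text \<open>The chain cell of a chain column j is the topmost cell of column j (the bottommost one for
  j = 1); the increasing part of the word adds exactly these cells.\<close>
definition chain_cell :: "nat \<Rightarrow> nat \<Rightarrow> bool" where
  "chain_cell q j \<longleftrightarrow> (q, j) \<in> S \<and> j \<in> chain_cols \<and> (2 \<le> j \<longrightarrow> (\<forall>q'. (q', j) \<in> S \<longrightarrow> q' \<le> q)) \<and>
      (j = 1 \<longrightarrow> (\<forall>q'. (q', 1) \<in> S \<longrightarrow> q \<le> q'))"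

lemma S_iff: "(q, j) \<in> S \<longleftrightarrow> q < length B \<and> inner \<alpha> q < j \<and> j \<le> B!q"
  by (simp add: cells_def)

lemma S_col_pos: "(q, j) \<in> S \<Longrightarrow> 1 \<le> j"
  by (auto simp: S_iff)

lemma row_prefix: "(q, j) \<in> S \<Longrightarrow> inner \<alpha> q < j' \<Longrightarrow> j' \<le> j \<Longrightarrow> (q, j') \<in> S"
  by (auto simp: S_iff)

lemma inner_pos: "q < length \<alpha> \<Longrightarrow> 1 \<le> inner \<alpha> q"
proof -
  assume q: "q < length \<alpha>"
  have "rev \<alpha> ! q \<in> set \<alpha>" using q by (metis length_rev nth_mem set_rev)
  then show ?thesis using comp q by (auto simp: inner_def is_composition_def Suc_le_eq)
qed

lemma first_column_iff: "(q, 1) \<in> S \<longleftrightarrow> length \<alpha> \<le> q \<and> q < length B"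
proof
  assume "(q, 1) \<in> S"
  then have "inner \<alpha> q < 1" "q < length B" by (auto simp: S_iff)
  then show "length \<alpha> \<le> q \<and> q < length B" using inner_pos by (meson leI not_le)
next
  assume "length \<alpha> \<le> q \<and> q < length B"
  then show "(q, 1) \<in> S" using adm inner_beyond by (auto simp: S_iff admissible_def)
qed

lemma le_top_col: "(q, j) \<in> S \<Longrightarrow> j \<le> top_col"
  unfolding top_col_def using finite_cells by (auto intro!: Max_ge intro: rev_image_eqI)

lemma top_col_occupied: "\<exists>q. (q, top_col) \<in> S"
proof -
  have "top_col \<in> snd ` S" unfolding top_col_def using finite_cells nonempty by (intro Max_in) auto
  then show ?thesis by force
qed

lemma linked_chain_cell: assumes "(q, j) \<in> S" "(q, Suc j) \<in> S" shows "chain_cell q j"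
proof -
  have "j \<in> chain_cols" using assms by (auto simp: chain_cols_def linked_cols_def)
  moreover have "1 \<le> j" using assms(1) S_col_pos by blast
  ultimately show ?thesis using assms nc unfolding chain_cell_def nc_rev_def
    by (metis numeral_2_eq_2 One_nat_def)
qed

lemma chain_cell_unique: assumes "chain_cell q j" "chain_cell q' j" shows "q = q'"
proof -
  have "1 \<le> j" using assms(1) S_col_pos by (auto simp: chain_cell_def)
  then consider "j = 1" | "2 \<le> j" by linarith
  then show ?thesis using assms unfolding chain_cell_def by cases (meson antisym)+
qed

lemma chain_end_top: assumes "chain_cell q j" "(q, Suc j) \<notin> S" shows "j = top_col"
proof (rule ccontr)
  assume "j \<noteq> top_col"
  then have "j \<in> linked_cols" using assms by (auto simp: chain_cell_def chain_cols_def)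
  then obtain q0 where "(q0, j) \<in> S" "(q0, Suc j) \<in> S" by (auto simp: linked_cols_def)
  then show False using linked_chain_cell chain_cell_unique assms by blast
qed

lemma chain_col_bounds: "j \<in> chain_cols \<Longrightarrow> 1 \<le> j \<and> j \<le> top_col"
proof -
  assume "j \<in> chain_cols"
  then consider "j = top_col" | q where "(q, j) \<in> S" "(q, Suc j) \<in> S"
    by (auto simp: chain_cols_def linked_cols_def)
  then show "1 \<le> j \<and> j \<le> top_col"
  proof cases
    case 1 then show ?thesis using top_col_occupied S_col_pos by blast
  next
    case 2 then show ?thesis using S_col_pos le_top_col by fastforce
  qed
qed

lemma finite_chain_cols: "finite chain_cols"
  by (rule finite_subset[of _ "{..top_col}"]) (auto dest: chain_col_bounds)

lemma chain_cell_exists: assumes "j \<in> chain_cols" shows "\<exists>q. chain_cell q j"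
proof -
  define Q where "Q = {q. (q, j) \<in> S}"
  have finQ: "finite Q" unfolding Q_def
    by (rule finite_subset[of _ "fst ` S"]) (auto simp: finite_cells intro: rev_image_eqI)
  have neQ: "Q \<noteq> {}" using assms top_col_occupied by (auto simp: Q_def chain_cols_def linked_cols_def)
  show ?thesis
  proof (cases "j = 1")
    case True
    have "Min Q \<in> Q" using finQ neQ by (rule Min_in)
    moreover have "\<forall>q'. (q', 1) \<in> S \<longrightarrow> Min Q \<le> q'" using finQ True by (auto simp: Q_def)
    ultimately show ?thesis using True assms by (intro exI[of _ "Min Q"]) (auto simp: chain_cell_def Q_def)
  next
    case False
    have "Max Q \<in> Q" using finQ neQ by (rule Max_in)
    moreover have "\<forall>q'. (q', j) \<in> S \<longrightarrow> q' \<le> Max Q" using finQ by (auto simp: Q_def)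
    ultimately show ?thesis using False assms by (intro exI[of _ "Max Q"]) (auto simp: chain_cell_def Q_def)
  qed
qed

text \<open>Let B' be an intermediate shape inside B and (p, c) a cell
  of the strip, c >= 2, such that row p of B' already contains all strip cells left of column c,
  every strip cell in column c above row p is already present, and all present cells in column
  c - 1 are chain cells.  Then the letter c adds exactly the cell (p, c): row p has length c - 1
  in B' and no higher row of B' has this length.\<close>
lemma no_equal_row_above:
  assumes adm': "admissible \<alpha> B'" and sub: "cells \<alpha> B' \<subseteq> S" and pS: "(p, c) \<in> S"
    and c2: "2 \<le> c" and cM: "c \<le> top_col"
    and above: "\<And>q. p < q \<Longrightarrow> (q, c) \<in> S \<Longrightarrow> (q, c) \<in> cells \<alpha> B'"
    and chain_left: "\<And>q. (q, c - 1) \<in> cells \<alpha> B' \<Longrightarrow> chain_cell q (c - 1)"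
    and q: "p < q" "q < length B'"
  shows "B'!q \<noteq> c - 1"
proof
  assume v: "B'!q = c - 1"
  have qB: "q < length B" "B'!q \<le> B!q" using cells_subset_rows[OF adm' adm sub q(2)] by auto
  have inner_q: "inner \<alpha> q \<le> c - 1" using adm' q v by (auto simp: admissible_def)
  have Bq: "B!q = c - 1"
  proof (rule ccontr)
    assume "B!q \<noteq> c - 1"
    then have "(q, c) \<in> S" using qB v inner_q c2 by (auto simp: S_iff)
    then have "(q, c) \<in> cells \<alpha> B'" using above q(1) by blast
    then show False using v c2 by (auto simp: cells_def)
  qed
  show False
  proof (cases "inner \<alpha> q = c - 1")
    case True
    then have "q < length \<alpha>" using c2 inner_beyond[of \<alpha> q] by (cases "q < length \<alpha>") auto
    then have "B!p \<le> B!q" using compatible q(1) True pS unfolding order_compatible_def S_iff by auto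
    then show False using Bq pS by (auto simp: S_iff)
  next
    case False
    then have "(q, c - 1) \<in> cells \<alpha> B'" using inner_q q v by (auto simp: cells_def)
    then have "chain_cell q (c - 1)" by (rule chain_left)
    moreover have "(q, Suc (c - 1)) \<notin> S" using Bq c2 by (auto simp: S_iff)
    ultimately have "c - 1 = top_col" by (rule chain_end_top)
    then show False using cM c2 by simp
  qed
qed

lemma grow_row:
  assumes adm': "admissible \<alpha> B'" and sub: "cells \<alpha> B' \<subseteq> S" and pS: "(p, c) \<in> S"
    and c2: "2 \<le> c" and cM: "c \<le> top_col"
    and left: "\<And>j. j < c \<Longrightarrow> (p, j) \<in> S \<Longrightarrow> (p, j) \<in> cells \<alpha> B'"
    and fresh: "(p, c) \<notin> cells \<alpha> B'"
    and above: "\<And>q. p < q \<Longrightarrow> (q, c) \<in> S \<Longrightarrow> (q, c) \<in> cells \<alpha> B'"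
    and chain_left: "\<And>q. (q, c - 1) \<in> cells \<alpha> B' \<Longrightarrow> chain_cell q (c - 1)"
  shows "rstep c B' (B'[p := c]) \<and> cells \<alpha> (B'[p := c]) = insert (p, c) (cells \<alpha> B') \<and>
    admissible \<alpha> (B'[p := c])"
proof -
  have p_len: "p < length B'"
  proof (cases "p < length \<alpha>")
    case True then show ?thesis using adm' by (simp add: admissible_def)
  next
    case False
    then have "(p, 1) \<in> S" using pS c2 row_prefix inner_beyond by simp
    then have "(p, 1) \<in> cells \<alpha> B'" using left c2 by simp
    then show ?thesis by (simp add: cells_def)
  qed
  have "inner \<alpha> p < c" using pS by (simp add: S_iff)
  then have p_val: "B'!p = c - 1"
    using row_length_from_cells[OF adm' p_len] left[of "c - 1"] row_prefix[OF pS] fresh c2 by auto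
  have "\<forall>q. p < q \<and> q < length B' \<longrightarrow> B'!q \<noteq> c - 1"
    using no_equal_row_above[OF adm' sub pS c2 cM above chain_left] by blast
  then have step: "rstep c B' (B'[p := c])" unfolding rstep_def using c2 p_len p_val by auto
  have "inner \<alpha> p \<le> B'!p" using adm' p_len by (simp add: admissible_def)
  then show ?thesis
    using step cells_update[OF p_len _ p_val c2] admissible_step[OF adm' step] by simp
qed

definition chain_part :: "nat set \<Rightarrow> (nat \<times> nat) set" where
  "chain_part E = {(q, j). chain_cell q j \<and> j \<in> E}"

lemma chain_part_subset: "chain_part E \<subseteq> S"
  by (auto simp: chain_part_def chain_cell_def)

lemma chain_cell_col_pos: "chain_cell q j \<Longrightarrow> 1 \<le> j"
  using S_col_pos by (auto simp: chain_cell_def)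

text \<open>The first letter 1 creates the lowest row above alpha, which is the chain cell of column 1.\<close>
lemma chain_start:
  assumes adm': "admissible \<alpha> B'" and empty: "cells \<alpha> B' = {}" and col1: "1 \<in> chain_cols"
  shows "rstep 1 B' (B' @ [1]) \<and> cells \<alpha> (B' @ [1]) = chain_part {1} \<and> admissible \<alpha> (B' @ [1])"
proof -
  have len: "length B' = length \<alpha>"
  proof (rule ccontr)
    assume "length B' \<noteq> length \<alpha>"
    then have "length \<alpha> < length B'" using adm' by (simp add: admissible_def)
    then have "(length \<alpha>, 1) \<in> cells \<alpha> B'" using adm' inner_beyond by (auto simp: admissible_def cells_def)
    then show False using empty by simp
  qed
  have step: "rstep 1 B' (B' @ [1])" by (simp add: rstep_def)
  obtain q0 where "chain_cell q0 1" using chain_cell_exists col1 by blast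
  then have "length \<alpha> < length B" using first_column_iff by (auto simp: chain_cell_def)
  then have "chain_cell (length \<alpha>) 1" using col1 first_column_iff by (auto simp: chain_cell_def)
  then have "chain_part {1} = {(length \<alpha>, 1)}"
    using chain_cell_unique by (auto simp: chain_part_def)
  moreover have "cells \<alpha> (B' @ [1]) = {(length \<alpha>, 1)}"
    using cells_append1[of \<alpha> B'] len empty by simp
  ultimately show ?thesis using step admissible_step[OF adm' step] by simp
qed

lemma chain_step:
  assumes adm': "admissible \<alpha> B'" and cells': "cells \<alpha> B' = chain_part E" and cD: "c \<in> chain_cols"
    and lt: "\<forall>j\<in>E. j < c" and cov: "\<forall>j\<in>chain_cols. j < c \<longrightarrow> j \<in> E"
  shows "\<exists>B''. rstep c B' B'' \<and> cells \<alpha> B'' = chain_part (insert c E) \<and> admissible \<alpha> B''"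
proof (cases "c = 1")
  case True
  then have "chain_part E = {}" "chain_part (insert c E) = chain_part {1}"
    using lt chain_cell_col_pos by (fastforce simp: chain_part_def)+
  then show ?thesis using chain_start[OF adm' _ cD[unfolded True]] cells' True by auto
next
  case False
  then have c2: "2 \<le> c" using cD chain_col_bounds by fastforce
  obtain p where chp: "chain_cell p c" using chain_cell_exists cD by blast
  have pS: "(p, c) \<in> S" using chp by (simp add: chain_cell_def)
  have "rstep c B' (B'[p := c]) \<and> cells \<alpha> (B'[p := c]) = insert (p, c) (cells \<alpha> B') \<and>
    admissible \<alpha> (B'[p := c])"
  proof (rule grow_row[OF adm' _ pS c2])
    show "cells \<alpha> B' \<subseteq> S" using cells' chain_part_subset by simp
    show "c \<le> top_col" using cD chain_col_bounds by blast
    show "(p, j) \<in> cells \<alpha> B'" if "j < c" "(p, j) \<in> S" for j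
    proof -
      have "(p, Suc j) \<in> S" using row_prefix[OF pS] that by (auto simp: S_iff)
      then have "chain_cell p j" using that(2) by (rule linked_chain_cell[rotated])
      then show ?thesis using cov that(1) cells' by (auto simp: chain_part_def chain_cell_def)
    qed
    show "(p, c) \<notin> cells \<alpha> B'" using cells' lt by (auto simp: chain_part_def)
    show "(q, c) \<in> cells \<alpha> B'" if "p < q" "(q, c) \<in> S" for q
      using chp c2 that by (auto simp: chain_cell_def)
    show "chain_cell q (c - 1)" if "(q, c - 1) \<in> cells \<alpha> B'" for q
      using that cells' by (simp add: chain_part_def)
  qed
  moreover have "chain_part (insert c E) = insert (p, c) (chain_part E)"
    using chain_cell_unique chp by (auto simp: chain_part_def)
  ultimately show ?thesis using cells' by auto
qed

lemma chain_phase: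
  "sorted_wrt (<) ds \<Longrightarrow> set ds \<subseteq> chain_cols \<Longrightarrow> (\<forall>j\<in>E. \<forall>x\<in>set ds. j < x) \<Longrightarrow>
   (\<forall>j\<in>chain_cols. j \<in> E \<or> j \<in> set ds) \<Longrightarrow> admissible \<alpha> B' \<Longrightarrow> cells \<alpha> B' = chain_part E \<Longrightarrow>
   \<exists>B''. rsteps ds B' B'' \<and> cells \<alpha> B'' = chain_part (E \<union> set ds) \<and> admissible \<alpha> B''"
proof (induction ds arbitrary: E B')
  case Nil then show ?case by simp
next
  case (Cons c ds)
  have "\<forall>j\<in>E. j < c" using Cons.prems(3) by simp
  moreover have "\<forall>j\<in>chain_cols. j < c \<longrightarrow> j \<in> E" using Cons.prems(1,4) by fastforce
  moreover have "c \<in> chain_cols" using Cons.prems(2) by simp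
  ultimately obtain B1 where B1: "rstep c B' B1" "cells \<alpha> B1 = chain_part (insert c E)" "admissible \<alpha> B1"
    using chain_step Cons.prems(5,6) by blast
  have "\<exists>B''. rsteps ds B1 B'' \<and> cells \<alpha> B'' = chain_part (insert c E \<union> set ds) \<and> admissible \<alpha> B''"
  proof (rule Cons.IH)
    show "sorted_wrt (<) ds" using Cons.prems(1) by simp
    show "set ds \<subseteq> chain_cols" using Cons.prems(2) by simp
    show "\<forall>j\<in>insert c E. \<forall>x\<in>set ds. j < x" using Cons.prems(1,3) by auto
    show "\<forall>j\<in>chain_cols. j \<in> insert c E \<or> j \<in> set ds" using Cons.prems(4) by auto
  qed (use B1 in auto)
  then show ?case using B1(1) by (auto simp: rsteps_Cons_iff)
qed

text \<open>After the chain and after all letters larger than c, the present cells are the chain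
  cells, all cells right of column c, and the cells of column c in rows t and above.\<close>
definition phase_part :: "nat \<Rightarrow> nat \<Rightarrow> (nat \<times> nat) set" where
  "phase_part c t = {(q, j). (q, j) \<in> S \<and> (chain_cell q j \<or> c < j \<or> (j = c \<and> t \<le> q))}"

definition loose_cell :: "nat \<Rightarrow> nat \<Rightarrow> bool" where
  "loose_cell q c \<longleftrightarrow> (q, c) \<in> S \<and> \<not> chain_cell q c"

lemma phase_part_subset: "phase_part c t \<subseteq> S" by (auto simp: phase_part_def)

lemma phase_step:
  assumes c2: "2 \<le> c" and cM: "c \<le> top_col" and adm': "admissible \<alpha> B'"
    and cells': "cells \<alpha> B' = phase_part c t"
    and loose: "loose_cell p c" and pt: "p < t" and pmax: "\<forall>q. loose_cell q c \<and> q < t \<longrightarrow> q \<le> p"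
  shows "\<exists>B''. rstep c B' B'' \<and> cells \<alpha> B'' = phase_part c p \<and> admissible \<alpha> B''"
proof -
  have pS: "(p, c) \<in> S" and not_chain: "\<not> chain_cell p c" using loose by (auto simp: loose_cell_def)
  have "rstep c B' (B'[p := c]) \<and> cells \<alpha> (B'[p := c]) = insert (p, c) (cells \<alpha> B') \<and>
    admissible \<alpha> (B'[p := c])"
  proof (rule grow_row[OF adm' _ pS c2 cM])
    show "cells \<alpha> B' \<subseteq> S" using cells' phase_part_subset by simp
    show "(p, j) \<in> cells \<alpha> B'" if "j < c" "(p, j) \<in> S" for j
    proof -
      have "(p, Suc j) \<in> S" using row_prefix[OF pS] that by (auto simp: S_iff)
      then have "chain_cell p j" using that(2) by (rule linked_chain_cell[rotated])
      then show ?thesis using cells' that(2) by (simp add: phase_part_def)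
    qed
    show "(p, c) \<notin> cells \<alpha> B'" using cells' not_chain pt by (auto simp: phase_part_def)
    show "(q, c) \<in> cells \<alpha> B'" if "p < q" "(q, c) \<in> S" for q
      using that pmax cells' by (cases "q < t") (auto simp: phase_part_def loose_cell_def)
    show "chain_cell q (c - 1)" if "(q, c - 1) \<in> cells \<alpha> B'" for q
      using that cells' c2 by (auto simp: phase_part_def)
  qed
  moreover have "phase_part c p = insert (p, c) (phase_part c t)"
  proof (rule set_eqI)
    fix x :: "nat \<times> nat"
    obtain a b where x: "x = (a, b)" by fastforce
    have "a = p \<or> t \<le> a" if "p \<le> a" "\<not> chain_cell a c" "(a, c) \<in> S"
      using that pmax by (cases "a < t") (auto simp: loose_cell_def)
    then show "x \<in> phase_part c p \<longleftrightarrow> x \<in> insert (p, c) (phase_part c t)"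
      using pS pt not_chain by (auto simp: phase_part_def x not_le)
  qed
  ultimately show ?thesis using cells' by auto
qed

lemma column_block:
  assumes c2: "2 \<le> c" and cM: "c \<le> top_col"
  shows "admissible \<alpha> B' \<Longrightarrow> cells \<alpha> B' = phase_part c t \<Longrightarrow>
    \<exists>B'' m. rsteps (replicate m c) B' B'' \<and> cells \<alpha> B'' = phase_part c 0 \<and> admissible \<alpha> B''"
proof (induction t arbitrary: B' rule: less_induct)
  case (less t)
  show ?case
  proof (cases "\<exists>q. loose_cell q c \<and> q < t")
    case True
    define Q where "Q = {q. loose_cell q c \<and> q < t}"
    have fin: "finite Q" unfolding Q_def by (rule finite_subset[of _ "{..<t}"]) auto
    have ne: "Q \<noteq> {}" using True by (auto simp: Q_def)
    define p where "p = Max Q"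
    have p: "loose_cell p c" "p < t" using Max_in[OF fin ne] by (auto simp: p_def Q_def)
    have pmax: "\<forall>q. loose_cell q c \<and> q < t \<longrightarrow> q \<le> p" using Max_ge[OF fin] by (auto simp: p_def Q_def)
    obtain B1 where B1: "rstep c B' B1" "cells \<alpha> B1 = phase_part c p" "admissible \<alpha> B1"
      using phase_step[OF c2 cM less.prems p pmax] by blast
    obtain B'' m where B'': "rsteps (replicate m c) B1 B''" "cells \<alpha> B'' = phase_part c 0" "admissible \<alpha> B''"
      using less.IH[OF p(2) B1(3) B1(2)] by blast
    have "rsteps (replicate (Suc m) c) B' B''" using B1(1) B''(1) by (auto simp: rsteps_Cons_iff)
    then show ?thesis using B'' by blast
  next
    case False
    then have "phase_part c t = phase_part c 0" by (auto simp: phase_part_def loose_cell_def)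
    then show ?thesis using less.prems by (intro exI[of _ B'] exI[of _ 0]) auto
  qed
qed

lemma phase_part_shift: "phase_part (Suc c) 0 = phase_part c (length B)"
  by (auto simp: phase_part_def S_iff)

lemma columns_down:
  "1 \<le> c \<Longrightarrow> c \<le> top_col \<Longrightarrow> admissible \<alpha> B' \<Longrightarrow> cells \<alpha> B' = phase_part c (length B) \<Longrightarrow>
   \<exists>B'' ph. rsteps ph B' B'' \<and> cells \<alpha> B'' = phase_part 1 (length B) \<and> admissible \<alpha> B'' \<and>
      sorted_wrt (\<ge>) ph \<and> (\<forall>x\<in>set ph. 2 \<le> x \<and> x \<le> c)"
proof (induction c arbitrary: B')
  case 0 then show ?case by simp
next
  case (Suc c)
  show ?case
  proof (cases "c = 0")
    case True then show ?thesis using Suc.prems by (intro exI[of _ B'] exI[of _ "[]"]) auto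
  next
    case False
    obtain B1 m where B1: "rsteps (replicate m (Suc c)) B' B1" "cells \<alpha> B1 = phase_part (Suc c) 0"
      "admissible \<alpha> B1"
      using column_block[of "Suc c" B' "length B"] Suc.prems False by auto
    then obtain B'' ph where B'': "rsteps ph B1 B''" "cells \<alpha> B'' = phase_part 1 (length B)"
      "admissible \<alpha> B''" "sorted_wrt (\<ge>) ph" "\<forall>x\<in>set ph. 2 \<le> x \<and> x \<le> c"
      using Suc.IH[of B1] Suc.prems False phase_part_shift by auto
    have "rsteps (replicate m (Suc c) @ ph) B' B''" using B1(1) B''(1) rsteps_append by blast
    moreover have "sorted_wrt (\<ge>) (replicate m (Suc c) @ ph)"
      using B''(4,5) by (auto simp: sorted_wrt_append intro: sorted_wrt_replicate)
    moreover have "\<forall>x\<in>set (replicate m (Suc c) @ ph). 2 \<le> x \<and> x \<le> Suc c"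
      using B''(5) False by auto
    ultimately show ?thesis using B''(2,3) by blast
  qed
qed

text \<open>At this point only the cells of column 1 above the chain cell are missing: they are the
  new rows of length 1, added by a final block of letters 1.\<close>
lemma final_ones:
  assumes adm': "admissible \<alpha> B'" and cells': "cells \<alpha> B' = phase_part 1 (length B)"
  shows "\<exists>m. rsteps (replicate m 1) B' B"
proof -
  have sub: "cells \<alpha> B' \<subseteq> S" using cells' phase_part_subset by simp
  have present: "(q, 1) \<in> cells \<alpha> B'" if "length \<alpha> \<le> q" "q < length B'" for q
    using adm' inner_beyond that by (auto simp: admissible_def cells_def)
  have len: "length B' \<le> length B"
    using present[of "length B"] sub adm by (force simp: S_iff admissible_def)
  have same_rows: "B'!q = B!q" if "q < length B'" for q
  proof (rule row_eq_from_cells[OF adm' adm that])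
    show "q < length B" using that len by simp
    show "(q, j) \<in> cells \<alpha> B' \<longleftrightarrow> (q, j) \<in> S" for j
      using sub present[of q] that cells' first_column_iff S_col_pos[of q j]
      by (cases "j = 1") (auto simp: phase_part_def)
  qed
  have new_rows: "B!q = 1" if "length B' \<le> q" "q < length B" for q
  proof (rule ccontr)
    assume "B!q \<noteq> 1"
    moreover have "inner \<alpha> q = 0" "1 \<le> B!q"
      using that adm' adm inner_beyond by (auto simp: admissible_def)
    ultimately have "(q, 2) \<in> S" using that by (auto simp: S_iff)
    then have "(q, 2) \<in> cells \<alpha> B'" using cells' by (simp add: phase_part_def)
    then show False using that by (simp add: cells_def)
  qed
  have "B = B' @ replicate (length B - length B') 1"
    using len same_rows new_rows by (intro nth_equalityI) (auto simp: nth_append)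
  then show ?thesis using rsteps_replicate_one[of "length B - length B'" B'] by metis
qed

text \<open>The word: the chain columns in increasing order, then blocks top_col, ..., 2 completing
  the columns, then letters 1 for the remaining new rows.  Read from right to left this is a
  reverse hookword.\<close>
lemma strip_word: "\<exists>w. reverse_hookword w \<and> rsteps (rev w) (rev \<alpha>) B"
proof -
  obtain ds where ds: "sorted_wrt (<) ds" "set ds = chain_cols"
    using ex1_sorted_list_for_set_if_finite[OF finite_chain_cols] by blast
  have adm0: "admissible \<alpha> (rev \<alpha>)" using admissible_init comp .
  have "cells \<alpha> (rev \<alpha>) = chain_part {}" using cells_init by (simp add: chain_part_def)
  then obtain B1 where B1: "rsteps ds (rev \<alpha>) B1" "cells \<alpha> B1 = chain_part chain_cols" "admissible \<alpha> B1"
    using chain_phase[of ds "{}", OF ds(1) _ _ _ adm0] ds(2) by auto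
  have "chain_part chain_cols = phase_part top_col (length B)"
    using le_top_col by (fastforce simp: chain_part_def phase_part_def chain_cell_def S_iff)
  moreover have top1: "1 \<le> top_col" using chain_col_bounds chain_cols_def by blast
  ultimately obtain B2 ph where B2: "rsteps ph B1 B2" "cells \<alpha> B2 = phase_part 1 (length B)"
    "admissible \<alpha> B2" "sorted_wrt (\<ge>) ph" "\<forall>x\<in>set ph. 2 \<le> x \<and> x \<le> top_col"
    using columns_down[OF top1 order_refl B1(3)] B1(2) by auto
  obtain m where B3: "rsteps (replicate m 1) B2 B" using final_ones[OF B2(3,2)] by blast
  define ys where "ys = rev ds"
  define xs where "xs = replicate m 1 @ rev ph"
  have ds_ne: "ds \<noteq> []" using ds(2) by (auto simp: chain_cols_def)
  have "top_col \<le> last ds" using strict_sorted_le_last[OF ds(1)] ds(2) by (simp add: chain_cols_def)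
  moreover have "last ds \<le> top_col" using last_in_set[OF ds_ne] ds(2) chain_col_bounds by blast
  ultimately have last_ds: "last ds = top_col" by simp
  have "rsteps (ds @ ph @ replicate m 1) (rev \<alpha>) B"
    using B1(1) B2(1) B3 rsteps_append by blast
  then have "rsteps (rev (xs @ ys)) (rev \<alpha>) B" by (simp add: xs_def ys_def)
  moreover have "reverse_hookword (xs @ ys)"
  proof (rule reverse_hookword_of_split[OF _ refl])
    show "ys \<noteq> []" using ds_ne by (simp add: ys_def)
    have "sorted (rev ph)" using B2(4) by (simp add: sorted_wrt_rev)
    then show "sorted xs" using B2(5) by (auto simp: xs_def sorted_append)
    show "sorted_wrt (>) ys" using ds(1) by (simp add: ys_def sorted_wrt_rev)
    have "hd ys = top_col" using last_ds by (simp add: ys_def hd_rev)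
    then show "\<forall>x\<in>set xs. x \<le> hd ys" using B2(5) top1 by (auto simp: xs_def)
    have "\<forall>x\<in>set ds. 1 \<le> x" using ds(2) chain_col_bounds by blast
    then show "\<forall>x\<in>set (xs @ ys). 1 \<le> x" using B2(5) by (auto simp: xs_def ys_def)
  qed
  ultimately show ?thesis by blast
qed

end

lemma hookword_image_is_strip:
  assumes comp: "is_composition \<alpha>" and w: "w \<in> CRHW n" "w \<noteq> []" and act: "word_act w \<alpha> = Some \<beta>"
  shows "comp_less \<alpha> \<beta> \<and> nc_border_strip (skew \<beta> \<alpha>) \<and> card (skew \<beta> \<alpha>) = n"
proof -
  have hook: "reverse_hookword w" and conn: "connected_word w" and n: "length w = n"
    using w(1) by (auto simp: CRHW_def)
  obtain nc: "nc_rev (cells \<alpha> (rev \<beta>))" and card: "card (cells \<alpha> (rev \<beta>)) = length w"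
    and cols: "snd ` cells \<alpha> (rev \<beta>) = set w" and adm: "admissible \<alpha> (rev \<beta>)"
    using hookword_cells[OF comp act hook] by blast
  have len: "length \<alpha> \<le> length \<beta>" using adm by (simp add: admissible_def)
  have "interval_shape (skew \<beta> \<alpha>)"
    using interval_shape_iff_connected supp_skew[OF len] cols conn w(2) by simp
  then have "nc_border_strip (skew \<beta> \<alpha>)"
    using nc skew_nc_iff[OF len] nc_border_strip_iff by blast
  then show ?thesis using word_act_comp_less[OF act w(2)] card_skew[OF len] card n by simp
qed

lemma strip_is_hookword_image:
  assumes comp: "is_composition \<alpha>" and less: "comp_less \<alpha> \<beta>"
    and strip: "nc_border_strip (skew \<beta> \<alpha>)" and card: "card (skew \<beta> \<alpha>) = n" and n: "1 \<le> n"
  shows "\<exists>w \<in> CRHW n. word_act w \<alpha> = Some \<beta>"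
proof -
  obtain adm: "admissible \<alpha> (rev \<beta>)" and compatible: "order_compatible \<alpha> (rev \<beta>)"
    using comp_less_order_compatible[OF comp less] by blast
  have len: "length \<alpha> \<le> length \<beta>" using adm by (simp add: admissible_def)
  have interval: "interval_shape (skew \<beta> \<alpha>)" and "nc_conditions (skew \<beta> \<alpha>)"
    using strip nc_border_strip_iff by blast+
  then have nc: "nc_rev (cells \<alpha> (rev \<beta>))" using skew_nc_iff[OF len] by blast
  have card_cells: "card (cells \<alpha> (rev \<beta>)) = n" using card card_skew[OF len] by simp
  then have "cells \<alpha> (rev \<beta>) \<noteq> {}" using n by auto
  then interpret strip_target \<alpha> "rev \<beta>" using comp adm compatible nc by unfold_locales
  obtain w where hook: "reverse_hookword w" and steps: "rsteps (rev w) (rev \<alpha>) (rev \<beta>)"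
    using strip_word by blast
  have "card (cells \<alpha> (rev \<beta>)) = length w" "snd ` cells \<alpha> (rev \<beta>) = set w"
    using rsteps_cells[OF admissible_init[OF comp] steps] cells_init by auto
  then have length: "length w = n" and ne: "w \<noteq> []" and cols: "supp (skew \<beta> \<alpha>) = set w"
    using card_cells n supp_skew[OF len] by auto
  have "connected_word w" using interval interval_shape_iff_connected[OF cols ne] by blast
  then have "w \<in> CRHW n" using hook length by (simp add: CRHW_def)
  moreover have "word_act w \<alpha> = Some (rev (rev \<beta>))" using steps by (rule rsteps_word_act)
  ultimately show ?thesis by auto
qed

theorem mainTheorem11:
  fixes \<alpha> :: "nat list" and n :: nat
  assumes "is_composition \<alpha>" and "1 \<le> n"
  shows "{\<beta>. \<exists>w \<in> CRHW n. word_act w \<alpha> = Some \<beta>}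
       = {\<beta>. comp_less \<alpha> \<beta> \<and> nc_border_strip (skew \<beta> \<alpha>) \<and> card (skew \<beta> \<alpha>) = n}"
proof (rule set_eqI, rule iffI)
  fix \<beta> assume "\<beta> \<in> {\<beta>. \<exists>w \<in> CRHW n. word_act w \<alpha> = Some \<beta>}"
  then obtain w where w: "w \<in> CRHW n" "word_act w \<alpha> = Some \<beta>" by blast
  moreover have "w \<noteq> []" using w(1) assms(2) by (auto simp: CRHW_def)
  ultimately show "\<beta> \<in> {\<beta>. comp_less \<alpha> \<beta> \<and> nc_border_strip (skew \<beta> \<alpha>) \<and> card (skew \<beta> \<alpha>) = n}"
    using hookword_image_is_strip[OF assms(1)] by simp
next
  fix \<beta> assume "\<beta> \<in> {\<beta>. comp_less \<alpha> \<beta> \<and> nc_border_strip (skew \<beta> \<alpha>) \<and> card (skew \<beta> \<alpha>) = n}"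
  then show "\<beta> \<in> {\<beta>. \<exists>w \<in> CRHW n. word_act w \<alpha> = Some \<beta>}"
    using strip_is_hookword_image[OF assms(1) _ _ _ assms(2)] by simp
qed

end
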